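(* Let $\Delta$ be a full-dimensional convex polyhedron of $\mathbb{R}^n$ with the induced structure of Euclidean polyhedral space, and set $U=\operatorname{relint}(\Delta)$. Let $\Pi$ be a polyhedral complex on $\Delta$ and $f$ a piecewise affine function on $\Delta$ defined on $\Pi$. Then $f$ is strictly concave on $\Pi|_U$ if and only if $f$ is concave in the usual sense and $\Pi=\Pi(f)$. In particular, $\Pi$ is regular on $U$ if and only if there is a concave piecewise affine function $f$ on $\Delta$ with $\Pi=\Pi(f)$.
   Context: Structure: $\Delta$ is quasi-embedded in the Euclidean space $\mathbb{R}^{n+1}$ (standard inner product) via $\iota(x)=(x,1)$; polyhedral complexes on $\Delta$ are finite families of convex polyhedra covering $\Delta$, closed under taking faces (including the empty face) and pairwise intersecting in common faces. $\tau\prec\sigma$ means $\tau$ is a face of $\sigma$. For a nonempty facet $\tau$ of $\sigma$, $v_{\sigma\setminus\tau}$ is the unit vector orthogonal to the affine span of $\iota(\tau)$, parallel to that of $\iota(\sigma)$, pointing towards $\sigma$. For $V\subset\Delta$ open, $\Pi|_V$ denotes the polyhedra meeting $V$, $\Pi|_V(k)$ those of dimension $k$. A $k$-dimensional weight $c\colon\Pi|_V(k)\to\mathbb{R}$ is positive if $c\ge0$, and a Minkowski weight if $\sum_{\sigma\in\Pi|_V(k),\sigma\succ\tau}c(\sigma)v_{\sigma\setminus\tau}=0$ for each $\tau\in\Pi|_V(k-1)$; $M^+_k(\Pi|_V)$ is the set of positive Minkowski weights. A function $f$ is piecewise affine defined on $\Pi$ if it is affine on each polyhedron of $\Pi$;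 writing $f=f_\sigma\circ\iota$ on $\sigma$ with $f_\sigma$ linear on $\mathbb{R}^{n+1}$, the product is $(f\cdot c)(\tau)=-\sum_{\sigma\in\Pi|_V(k),\sigma\succ\tau}c(\sigma)f_\sigma(v_{\sigma\setminus\tau})$. Strict concavity: $f$ is strictly concave on $\Pi|_U$ if it is defined on $\Pi$ and for every integer $k$, every $\tau\in\Pi|_U(k)$, every open $V\subset U$ with $V\cap\tau\neq\emptyset$ and every $c\in M^+_{k+1}(\Pi|_V)$ with $c(\sigma)>0$ for some $\sigma\in\Pi|_V(k+1)$ with $\sigma\succ\tau$, one has $(f\cdot c)(\tau)>0$. $\Pi$ is regular on $U$ if some piecewise affine function on $U$ is strictly concave on $\Pi|_U$. For a concave piecewise affine $f$ on $\Delta$, $\Pi(f)$ is the polyhedral complex on $\Delta$ consisting of the subsets $\sigma\subset\Delta$ for which there is an affine function $\ell$ on $\Delta$ with $f=\ell$ on $\sigma$ and $f<\ell$ on $\Delta\setminus\sigma$. *)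

theory Defs
  imports "HOL-Analysis.Analysis"
begin

definition iota :: "'a::euclidean_space \<Rightarrow> 'a \<times> real" where
  "iota x = (x, 1)"

definition polyhedral_complex :: "'a::euclidean_space set \<Rightarrow> 'a set set \<Rightarrow> bool" where
  "polyhedral_complex D PP \<longleftrightarrow>
     finite PP \<and>
     (\<forall>\<sigma>\<in>PP. polyhedron \<sigma> \<and> \<sigma> \<subseteq> D) \<and>
     \<Union>PP = D \<and>
     (\<forall>\<sigma>\<in>PP. \<forall>\<tau>. \<tau> face_of \<sigma> \<longrightarrow> \<tau> \<in> PP) \<and>
     (\<forall>\<sigma>\<in>PP. \<forall>\<tau>\<in>PP. (\<sigma> \<inter> \<tau>) face_of \<sigma> \<and> (\<sigma> \<inter> \<tau>) face_of \<tau>)"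

definition restr_dim :: "'a::euclidean_space set set \<Rightarrow> 'a set \<Rightarrow> int \<Rightarrow> 'a set set" where
  "restr_dim PP V k = {\<sigma>\<in>PP. \<sigma> \<inter> V \<noteq> {} \<and> aff_dim \<sigma> = k}"

definition restr :: "'a::euclidean_space set set \<Rightarrow> 'a set \<Rightarrow> 'a set set" where
  "restr PP V = {\<sigma>\<in>PP. \<sigma> \<inter> V \<noteq> {}}"

definition normal_vec :: "'a::euclidean_space set \<Rightarrow> 'a set \<Rightarrow> 'a \<times> real" where
  "normal_vec \<sigma> \<tau> = (SOME v. norm v = 1 \<and>
      (\<forall>p\<in>affine hull (iota ` \<tau>). \<forall>q\<in>affine hull (iota ` \<tau>). v \<bullet> (p - q) = 0) \<and>
      (\<forall>p\<in>affine hull (iota ` \<sigma>). p + v \<in> affine hull (iota ` \<sigma>)) \<and>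
      (\<forall>x\<in>\<tau>. \<forall>y\<in>\<sigma> - \<tau>. 0 < v \<bullet> (iota y - iota x)))"

definition pos_minkowski_weights ::
    "'a::euclidean_space set set \<Rightarrow> 'a set \<Rightarrow> int \<Rightarrow> ('a set \<Rightarrow> real) set" where
  "pos_minkowski_weights PP V k = {c.
      (\<forall>\<sigma>\<in>restr_dim PP V k. 0 \<le> c \<sigma>) \<and>
      (\<forall>\<tau>\<in>restr_dim PP V (k - 1).
         (\<Sum>\<sigma>\<in>{\<sigma>\<in>restr_dim PP V k. \<tau> face_of \<sigma>}. c \<sigma> *\<^sub>R normal_vec \<sigma> \<tau>) = 0)}"

definition defined_on :: "'a::euclidean_space set set \<Rightarrow> ('a \<Rightarrow> real) \<Rightarrow> bool" where
  "defined_on PP f \<longleftrightarrow> (\<forall>\<sigma>\<in>PP. \<exists>a b. \<forall>x\<in>\<sigma>. f x = a \<bullet> x + b)"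

definition piecewise_affine :: "'a::euclidean_space set \<Rightarrow> ('a \<Rightarrow> real) \<Rightarrow> bool" where
  "piecewise_affine D f \<longleftrightarrow> (\<exists>PP. polyhedral_complex D PP \<and> defined_on PP f)"

definition lin_part :: "('a::euclidean_space \<Rightarrow> real) \<Rightarrow> 'a set \<Rightarrow> ('a \<times> real \<Rightarrow> real)" where
  "lin_part f \<sigma> = (SOME g. linear g \<and> (\<forall>x\<in>\<sigma>. f x = g (iota x)))"

definition weight_prod ::
    "'a::euclidean_space set set \<Rightarrow> 'a set \<Rightarrow> int \<Rightarrow> ('a \<Rightarrow> real) \<Rightarrow> ('a set \<Rightarrow> real) \<Rightarrow> 'a set \<Rightarrow> real" where
  "weight_prod PP V k f c \<tau> =
     - (\<Sum>\<sigma>\<in>{\<sigma>\<in>restr_dim PP V k. \<tau> face_of \<sigma>}. c \<sigma> * lin_part f \<sigma> (normal_vec \<sigma> \<tau>))"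

definition strictly_concave :: "'a::euclidean_space set set \<Rightarrow> 'a set \<Rightarrow> ('a \<Rightarrow> real) \<Rightarrow> bool" where
  "strictly_concave PP U f \<longleftrightarrow> defined_on PP f \<and>
     (\<forall>k::int. \<forall>\<tau>\<in>restr_dim PP U k. \<forall>V. open V \<and> V \<subseteq> U \<and> V \<inter> \<tau> \<noteq> {} \<longrightarrow>
        (\<forall>c\<in>pos_minkowski_weights PP V (k + 1).
           (\<exists>\<sigma>\<in>restr_dim PP V (k + 1). \<tau> face_of \<sigma> \<and> 0 < c \<sigma>) \<longrightarrow>
           0 < weight_prod PP V (k + 1) f c \<tau>))"

definition regular_on :: "'a::euclidean_space set set \<Rightarrow> 'a set \<Rightarrow> bool" where
  "regular_on PP U \<longleftrightarrow> (\<exists>f. strictly_concave PP U f)"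

definition complex_of :: "'a::euclidean_space set \<Rightarrow> ('a \<Rightarrow> real) \<Rightarrow> 'a set set" where
  "complex_of D f = {\<sigma>. \<sigma> \<subseteq> D \<and> (\<exists>a b. (\<forall>x\<in>\<sigma>. f x = a \<bullet> x + b) \<and>
                                      (\<forall>x\<in>D - \<sigma>. f x < a \<bullet> x + b))}"

end

theory Submission
  imports Defs
begin

(* If Pi = Pi(f), a cell tau is cut out by an affine function l >= f that agrees with f exactly
   on tau.  For every cell sigma having tau as a facet, l - f_sigma is positive on the normal
   v_{sigma \ tau}, and l annihilates the Minkowski relation sum c(sigma) v_{sigma \ tau} = 0, so
   (f . c)(tau) = sum c(sigma) (l - f_sigma)(v_{sigma \ tau}) > 0.

   Conversely, strict concavity tested on the weight equal to 1 on two full-dimensional cells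
   through a common facet (whose normals are opposite) says that the slope of f drops strictly
   when a line crosses that facet.  A generic segment from x to an interior point of a
   full-dimensional cell sigma crosses only facets, finitely often, so f(x) lies strictly below the
   affine extension of f on sigma whenever x is not in sigma.  Hence f is the minimum of the affine
   extensions of its full-dimensional pieces, thus concave, and the cells of Pi are exactly the
   sets where f touches an affine majorant: for a cell tau, average the pieces around tau and add
   the slacks of the facets of Delta containing tau. *)

section \<open>Normal vectors of facets\<close>

lemma affine_hull_iota_image:
  "affine hull (iota ` S) = iota ` (affine hull (S::'a::euclidean_space set))"
proof -
  have "iota ` S = (\<lambda>x. (0, 1) + x) ` ((\<lambda>x. (x, 0::real)) ` S)" for S :: "'a set"
    by (auto simp: iota_def image_image)
  moreover have "bounded_linear (\<lambda>x::'a. (x, 0::real))"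
    by (simp add: bounded_linear_Pair)
  ultimately show ?thesis
    by (simp only: affine_hull_translation affine_hull_linear_image[symmetric])
qed

lemma mem_affine_hull_iota:
  "p \<in> affine hull (iota ` S) \<longleftrightarrow> snd p = 1 \<and> fst p \<in> affine hull S"
proof -
  have "p \<in> iota ` (affine hull S) \<longleftrightarrow> snd p = 1 \<and> fst p \<in> affine hull S"
    by (cases p) (auto simp: iota_def image_iff)
  then show ?thesis by (simp add: affine_hull_iota_image)
qed

lemma inner_span_eq_zero:
  fixes w :: "'a::euclidean_space"
  assumes "\<forall>m\<in>M. w \<bullet> m = 0" "y \<in> span M"
  shows "w \<bullet> y = 0"
  using orthogonal_to_span[OF assms(2), of w] assms(1) by (auto simp: orthogonal_def)

lemma diff_projection_in_span_codim_one:
  fixes M L :: "'a::euclidean_space set"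
  assumes L: "subspace L" and MsubL: "M \<subseteq> L" and dim: "dim L = dim M + 1"
    and w: "w \<in> L" "w \<noteq> 0" "\<forall>m\<in>M. w \<bullet> m = 0" and u: "u \<in> L"
  shows "u - ((w \<bullet> u) / (w \<bullet> w)) *\<^sub>R w \<in> span M"
proof -
  define q where "q = u - ((w \<bullet> u) / (w \<bullet> w)) *\<^sub>R w"
  have qL: "q \<in> L" unfolding q_def using L w u by (simp add: subspace_diff subspace_scale)
  have wq: "w \<bullet> q = 0" using w(2) by (simp add: q_def inner_diff_right)
  obtain y z where y: "y \<in> span M" and z: "\<And>v. v \<in> span M \<Longrightarrow> orthogonal z v"
    and qyz: "q = y + z"
    using orthogonal_subspace_decomp_exists[of M q] by metis
  have "z = 0"
  proof (rule ccontr)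
    assume "z \<noteq> 0"
    have "span M \<subseteq> L" using L MsubL by (simp add: span_minimal)
    then have zL: "z \<in> L" using qL y qyz L by (metis add_diff_cancel_left' subsetD subspace_diff)
    have "w \<bullet> z = 0" using wq inner_span_eq_zero[OF w(3) y] qyz by (simp add: inner_add_right)
    then have "\<forall>m\<in>insert w M. z \<bullet> m = 0"
      using z by (auto simp: orthogonal_def inner_commute span_base)
    then have "z \<notin> span (insert w M)"
      using inner_span_eq_zero \<open>z \<noteq> 0\<close> by (metis inner_eq_zero_iff)
    moreover have "w \<notin> span M"
      using inner_span_eq_zero[OF w(3)] w(2) by (metis inner_eq_zero_iff)
    ultimately have "dim (insert z (insert w M)) = dim M + 2"
      by (simp add: dim_insert)
    moreover have "dim (insert z (insert w M)) \<le> dim L"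
      using zL w(1) MsubL by (intro dim_subset) auto
    ultimately show False using dim by simp
  qed
  then show ?thesis using y qyz q_def by simp
qed

lemma exists_unit_normal_codim_one:
  fixes M L :: "'a::euclidean_space set"
  assumes L: "subspace L" and MsubL: "M \<subseteq> L" and dim: "dim L = dim M + 1"
  obtains w where "w \<in> L" "norm w = 1" "\<forall>m\<in>span M. w \<bullet> m = 0"
proof -
  have "\<not> L \<subseteq> span M"
    using dim_subset[of L "span M"] dim by auto
  then obtain u where u: "u \<in> L" "u \<notin> span M" by blast
  obtain y z where y: "y \<in> span M" and z: "\<And>v. v \<in> span M \<Longrightarrow> orthogonal z v"
    and uyz: "u = y + z"
    using orthogonal_subspace_decomp_exists[of M u] by metis
  have "span M \<subseteq> L" using L MsubL by (simp add: span_minimal)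
  then have zL: "z \<in> L" using u y uyz L by (metis add_diff_cancel_left' subsetD subspace_diff)
  have "z \<noteq> 0" using u y uyz by auto
  show ?thesis
    by (rule that[of "z /\<^sub>R norm z"])
      (use zL L \<open>z \<noteq> 0\<close> z in \<open>auto simp: subspace_scale orthogonal_def\<close>)
qed

lemma facet_dim_span:
  fixes \<sigma> \<tau> :: "'a::euclidean_space set"
  assumes "\<tau> face_of \<sigma>" "x0 \<in> \<tau>" "aff_dim \<sigma> = aff_dim \<tau> + 1"
  shows "dim (span ((+) (- x0) ` \<sigma>)) = dim ((+) (- x0) ` \<tau>) + 1"
    and "(+) (- x0) ` \<tau> \<subseteq> span ((+) (- x0) ` \<sigma>)"
proof -
  have ts: "\<tau> \<subseteq> \<sigma>" using assms(1) face_of_imp_subset by blast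
  then have "x0 \<in> affine hull \<sigma>" "x0 \<in> affine hull \<tau>" using assms(2) by (auto intro: hull_inc)
  then show "dim (span ((+) (- x0) ` \<sigma>)) = dim ((+) (- x0) ` \<tau>) + 1"
    using assms(3) aff_dim_eq_dim[of x0 \<sigma>] aff_dim_eq_dim[of x0 \<tau>] unfolding dim_span by linarith
  show "(+) (- x0) ` \<tau> \<subseteq> span ((+) (- x0) ` \<sigma>)"
    using ts by (auto intro: span_base)
qed

lemma facet_direction_decomp:
  fixes \<sigma> \<tau> :: "'a::euclidean_space set"
  assumes "\<tau> face_of \<sigma>" "x0 \<in> \<tau>" "aff_dim \<sigma> = aff_dim \<tau> + 1"
    and w: "w \<in> span ((+) (- x0) ` \<sigma>)" "norm w = 1" "\<forall>m\<in>span ((+) (- x0) ` \<tau>). w \<bullet> m = 0"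
    and u: "u \<in> span ((+) (- x0) ` \<sigma>)"
  shows "u - (w \<bullet> u) *\<^sub>R w \<in> span ((+) (- x0) ` \<tau>)"
proof -
  have "w \<noteq> 0" "w \<bullet> w = 1" using w(2) by (auto simp: norm_eq_1)
  then show ?thesis
    using diff_projection_in_span_codim_one[OF subspace_span facet_dim_span(2,1)[OF assms(1-3)] w(1)
        _ _ u] w(3) by (auto intro: span_base)
qed

lemma facet_normal_exists:
  fixes \<sigma> \<tau> :: "'a::euclidean_space set"
  assumes poly: "polyhedron \<sigma>" and face: "\<tau> face_of \<sigma>" and x0: "x0 \<in> \<tau>"
    and dim: "aff_dim \<sigma> = aff_dim \<tau> + 1"
  obtains w where "w \<in> span ((+) (- x0) ` \<sigma>)" "norm w = 1"
    "\<forall>m\<in>span ((+) (- x0) ` \<tau>). w \<bullet> m = 0" "\<forall>x\<in>\<tau>. \<forall>y\<in>\<sigma> - \<tau>. 0 < w \<bullet> (y - x)"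
proof -
  define L where "L = span ((+) (- x0) ` \<sigma>)"
  define M where "M = (+) (- x0) ` \<tau>"
  note dimL = facet_dim_span(1)[OF face x0 dim, folded L_def M_def]
  note MsubL = facet_dim_span(2)[OF face x0 dim, folded L_def M_def]
  obtain n where n: "n \<in> L" "norm n = 1" "\<forall>m\<in>span M. n \<bullet> m = 0"
    using exists_unit_normal_codim_one[OF _ MsubL dimL] unfolding L_def by blast
  have "\<tau> exposed_face_of \<sigma>" using exposed_face_of_polyhedron[OF poly] face by blast
  then obtain a b where ab: "\<sigma> \<subseteq> {x. a \<bullet> x \<le> b}" "\<tau> = \<sigma> \<inter> {x. a \<bullet> x = b}"
    unfolding exposed_face_of_def by blast
  have "a \<bullet> m = 0" if "m \<in> M" for m
    using that ab(2) x0 by (auto simp: M_def inner_diff_right)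
  then have a_span: "a \<bullet> m = 0" if "m \<in> span M" for m
    using inner_span_eq_zero that by blast
  \<comment> \<open>\<open>a\<close> is normal to \<open>\<tau>\<close> inside \<open>L\<close>, hence a multiple of \<open>n\<close> there; its sign orients \<open>n\<close>.\<close>
  have sign: "(n \<bullet> (y - x0)) * (a \<bullet> n) < 0" if y: "y \<in> \<sigma> - \<tau>" for y
  proof -
    have "- x0 + y \<in> L" unfolding L_def using y by (auto intro: span_base)
    then have "(- x0 + y) - (n \<bullet> (- x0 + y)) *\<^sub>R n \<in> span M"
      using facet_direction_decomp[OF face x0 dim, of n] n unfolding L_def M_def by blast
    then have "a \<bullet> (- x0 + y) = (n \<bullet> (- x0 + y)) * (a \<bullet> n)"
      using a_span by (fastforce simp: inner_diff_right)
    moreover have "a \<bullet> y < b" "a \<bullet> x0 = b" using y x0 ab by auto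
    ultimately show ?thesis by (simp add: inner_add_right algebra_simps)
  qed
  define w where "w = (if a \<bullet> n > 0 then - n else n)"
  show thesis
  proof (rule that)
    show "w \<in> span ((+) (- x0) ` \<sigma>)" "norm w = 1" "\<forall>m\<in>span ((+) (- x0) ` \<tau>). w \<bullet> m = 0"
      using n by (auto simp: w_def L_def M_def span_neg)
    show "\<forall>x\<in>\<tau>. \<forall>y\<in>\<sigma> - \<tau>. 0 < w \<bullet> (y - x)"
    proof (intro ballI)
      fix x y assume "x \<in> \<tau>" "y \<in> \<sigma> - \<tau>"
      then have "n \<bullet> (- x0 + x) = 0" using n(3) by (auto simp: M_def intro: span_base)
      then have "w \<bullet> (y - x) = w \<bullet> (y - x0)"
        by (auto simp: w_def inner_diff_right inner_add_right)
      also have "0 < w \<bullet> (y - x0)"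
        using sign[OF \<open>y \<in> \<sigma> - \<tau>\<close>] by (auto simp: w_def mult_less_0_iff)
      finally show "0 < w \<bullet> (y - x)" .
    qed
  qed
qed

lemma normal_vec_someI:
  fixes \<sigma> \<tau> :: "'a::euclidean_space set"
  assumes "polyhedron \<sigma>" "\<tau> face_of \<sigma>" "x0 \<in> \<tau>" "aff_dim \<sigma> = aff_dim \<tau> + 1"
  shows "norm (normal_vec \<sigma> \<tau>) = 1"
    and "\<forall>p\<in>affine hull (iota ` \<tau>). \<forall>q\<in>affine hull (iota ` \<tau>). normal_vec \<sigma> \<tau> \<bullet> (p - q) = 0"
    and "\<forall>p\<in>affine hull (iota ` \<sigma>). p + normal_vec \<sigma> \<tau> \<in> affine hull (iota ` \<sigma>)"
    and "\<forall>x\<in>\<tau>. \<forall>y\<in>\<sigma> - \<tau>. 0 < normal_vec \<sigma> \<tau> \<bullet> (iota y - iota x)"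
proof -
  obtain w where w: "w \<in> span ((+) (- x0) ` \<sigma>)" "norm w = 1"
    "\<forall>m\<in>span ((+) (- x0) ` \<tau>). w \<bullet> m = 0" "\<forall>x\<in>\<tau>. \<forall>y\<in>\<sigma> - \<tau>. 0 < w \<bullet> (y - x)"
    using facet_normal_exists[OF assms] .
  have ts: "\<tau> \<subseteq> \<sigma>" using assms(2) face_of_imp_subset by blast
  have hull_\<sigma>: "affine hull \<sigma> = (+) x0 ` span ((+) (- x0) ` \<sigma>)"
    using affine_hull_span_gen[of x0 \<sigma>] assms(3) ts by (auto intro: hull_inc)
  have hull_\<tau>: "affine hull \<tau> = (+) x0 ` span ((+) (- x0) ` \<tau>)"
    using affine_hull_span_gen[of x0 \<tau>] assms(3) by (auto intro: hull_inc)
  let ?P = "\<lambda>v. norm v = 1 \<and>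
      (\<forall>p\<in>affine hull (iota ` \<tau>). \<forall>q\<in>affine hull (iota ` \<tau>). v \<bullet> (p - q) = 0) \<and>
      (\<forall>p\<in>affine hull (iota ` \<sigma>). p + v \<in> affine hull (iota ` \<sigma>)) \<and>
      (\<forall>x\<in>\<tau>. \<forall>y\<in>\<sigma> - \<tau>. 0 < v \<bullet> (iota y - iota x))"
  have "?P (w, 0)"
  proof (intro conjI ballI)
    fix p q assume "p \<in> affine hull (iota ` \<tau>)" "q \<in> affine hull (iota ` \<tau>)"
    then obtain mp mq where "mp \<in> span ((+) (- x0) ` \<tau>)" "mq \<in> span ((+) (- x0) ` \<tau>)"
      "p = (x0 + mp, 1)" "q = (x0 + mq, 1)"
      unfolding mem_affine_hull_iota hull_\<tau> by (cases p, cases q) auto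
    then show "(w, 0) \<bullet> (p - q) = 0" using w(3) by (simp add: inner_diff_right)
  next
    fix p assume "p \<in> affine hull (iota ` \<sigma>)"
    then obtain l where "l \<in> span ((+) (- x0) ` \<sigma>)" "p = (x0 + l, 1)"
      unfolding mem_affine_hull_iota hull_\<sigma> by (cases p) auto
    then show "p + (w, 0) \<in> affine hull (iota ` \<sigma>)"
      unfolding mem_affine_hull_iota hull_\<sigma> using w(1)
      by (auto simp: add.assoc intro!: image_eqI span_add)
  qed (use w in \<open>auto simp: iota_def norm_prod_def\<close>)
  then have "?P (normal_vec \<sigma> \<tau>)" unfolding normal_vec_def by (rule someI)
  then show "norm (normal_vec \<sigma> \<tau>) = 1"
    and "\<forall>p\<in>affine hull (iota ` \<tau>). \<forall>q\<in>affine hull (iota ` \<tau>). normal_vec \<sigma> \<tau> \<bullet> (p - q) = 0"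
    and "\<forall>p\<in>affine hull (iota ` \<sigma>). p + normal_vec \<sigma> \<tau> \<in> affine hull (iota ` \<sigma>)"
    and "\<forall>x\<in>\<tau>. \<forall>y\<in>\<sigma> - \<tau>. 0 < normal_vec \<sigma> \<tau> \<bullet> (iota y - iota x)"
    by blast+
qed

lemma normal_vec_facet:
  fixes \<sigma> \<tau> :: "'a::euclidean_space set"
  assumes "polyhedron \<sigma>" "\<tau> face_of \<sigma>" "x0 \<in> \<tau>" "aff_dim \<sigma> = aff_dim \<tau> + 1"
  obtains w where "normal_vec \<sigma> \<tau> = (w, 0)" "norm w = 1" "w \<in> span ((+) (- x0) ` \<sigma>)"
    "\<forall>m\<in>span ((+) (- x0) ` \<tau>). w \<bullet> m = 0" "\<forall>x\<in>\<tau>. \<forall>y\<in>\<sigma> - \<tau>. 0 < w \<bullet> (y - x)"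
proof -
  note nv = normal_vec_someI[OF assms]
  obtain w s where ws: "normal_vec \<sigma> \<tau> = (w, s)" by (cases "normal_vec \<sigma> \<tau>")
  have x0\<sigma>: "x0 \<in> \<sigma>" using assms(2,3) face_of_imp_subset by blast
  then have "iota x0 + (w, s) \<in> affine hull (iota ` \<sigma>)"
    using nv(3) ws by (auto intro: hull_inc)
  then have s: "s = 0" and "x0 + w \<in> affine hull \<sigma>"
    unfolding mem_affine_hull_iota by (auto simp: iota_def)
  then have "w \<in> span ((+) (- x0) ` \<sigma>)"
    using affine_hull_span_gen[of x0 \<sigma>] x0\<sigma> by (force intro: hull_inc)
  moreover have "w \<bullet> m = 0" if "m \<in> span ((+) (- x0) ` \<tau>)" for m
  proof (rule inner_span_eq_zero[OF _ that], intro ballI)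
    fix m assume "m \<in> (+) (- x0) ` \<tau>"
    then obtain x where "x \<in> \<tau>" "m = - x0 + x" by blast
    moreover have "(w, s) \<bullet> (iota x - iota x0) = 0"
      using nv(2) ws \<open>x \<in> \<tau>\<close> assms(3) by (metis hull_inc imageI)
    ultimately show "w \<bullet> m = 0" using s by (simp add: iota_def)
  qed
  ultimately show thesis
    using that[of w] nv(1,4) ws s by (simp add: iota_def norm_prod_def)
qed

section \<open>Linear parts and cells cut out by affine majorants\<close>

definition homogenize :: "'a::euclidean_space \<Rightarrow> real \<Rightarrow> 'a \<times> real \<Rightarrow> real" where
  "homogenize a b = (\<lambda>(u, s). a \<bullet> u + b * s)"

lemma linear_homogenize: "linear (homogenize a b)"
  unfolding homogenize_def by (rule linearI) (auto simp: inner_add_right algebra_simps)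

lemma homogenize_iota: "homogenize a b (iota x) = a \<bullet> x + b"
  by (simp add: homogenize_def iota_def)

lemma lin_part_affine:
  assumes "\<forall>x\<in>\<sigma>. f x = a \<bullet> x + b"
  shows "linear (lin_part f \<sigma>)" "\<forall>x\<in>\<sigma>. f x = lin_part f \<sigma> (iota x)"
proof -
  have "\<exists>g. linear g \<and> (\<forall>x\<in>\<sigma>. f x = g (iota x))"
    using assms linear_homogenize homogenize_iota by metis
  then have "linear (lin_part f \<sigma>) \<and> (\<forall>x\<in>\<sigma>. f x = lin_part f \<sigma> (iota x))"
    unfolding lin_part_def by (rule someI_ex)
  then show "linear (lin_part f \<sigma>)" "\<forall>x\<in>\<sigma>. f x = lin_part f \<sigma> (iota x)" by blast+
qed

lemma linear_slice:
  assumes "linear F"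
  shows "linear (\<lambda>u. F (u, 0::real))"
proof -
  have "linear (\<lambda>u. (u, 0::real))"
    by (rule linearI) simp_all
  from linear_compose[OF this assms] show ?thesis by (simp add: o_def)
qed

lemma lin_part_diff:
  assumes "\<forall>x\<in>\<sigma>. f x = a \<bullet> x + b" "x \<in> \<sigma>" "y \<in> \<sigma>"
  shows "lin_part f \<sigma> (y - x, 0) = f y - f x"
proof -
  note F = lin_part_affine[OF assms(1)]
  have "(y - x, 0) = iota y - iota x" by (simp add: iota_def)
  then show ?thesis using linear_diff[OF F(1)] F(2) assms(2,3) by simp
qed

lemma linear_factor_through_facet_normal:
  fixes H :: "'a::euclidean_space \<Rightarrow> real"
  assumes H: "linear H" and facet: "\<tau> face_of \<sigma>" "x0 \<in> \<tau>" "aff_dim \<sigma> = aff_dim \<tau> + 1"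
    and w: "w \<in> span ((+) (- x0) ` \<sigma>)" "norm w = 1" "\<forall>m\<in>span ((+) (- x0) ` \<tau>). w \<bullet> m = 0"
    and H0: "\<forall>y\<in>\<tau>. H (y - x0) = 0" and u: "u \<in> span ((+) (- x0) ` \<sigma>)"
  shows "H u = (w \<bullet> u) * H w"
proof -
  have "H (u - (w \<bullet> u) *\<^sub>R w) = 0"
    using linear_eq_0_on_span[OF H _ facet_direction_decomp[OF facet w u]] H0 by auto
  then show ?thesis using linear_diff[OF H] linear_scale[OF H] by simp
qed

lemma lin_part_normal_vec_less:
  fixes \<sigma> \<tau> :: "'a::euclidean_space set"
  assumes facet: "polyhedron \<sigma>" "\<tau> face_of \<sigma>" "x0 \<in> \<tau>" "aff_dim \<sigma> = aff_dim \<tau> + 1"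
    and f_\<sigma>: "\<forall>x\<in>\<sigma>. f x = a' \<bullet> x + b'"
    and f_\<tau>: "\<forall>x\<in>\<tau>. f x = a \<bullet> x + b" and below: "\<forall>x\<in>\<sigma> - \<tau>. f x < a \<bullet> x + b"
  shows "lin_part f \<sigma> (normal_vec \<sigma> \<tau>) < homogenize a b (normal_vec \<sigma> \<tau>)"
proof -
  obtain w where w: "normal_vec \<sigma> \<tau> = (w, 0)" "norm w = 1" "w \<in> span ((+) (- x0) ` \<sigma>)"
    "\<forall>m\<in>span ((+) (- x0) ` \<tau>). w \<bullet> m = 0" "\<forall>x\<in>\<tau>. \<forall>y\<in>\<sigma> - \<tau>. 0 < w \<bullet> (y - x)"
    using normal_vec_facet[OF facet] .
  define H where "H u = lin_part f \<sigma> (u, 0) - a \<bullet> u" for u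
  have "linear H"
    unfolding H_def by (intro linear_compose_sub linear_slice lin_part_affine[OF f_\<sigma>]
      bounded_linear.linear[OF bounded_linear_inner_right])
  have ts: "\<tau> \<subseteq> \<sigma>" using facet(2) face_of_imp_subset by blast
  have H_gap: "H (y - x0) = f y - (a \<bullet> y + b)" if "y \<in> \<sigma>" for y
    using lin_part_diff[OF f_\<sigma> _ that, of x0] f_\<tau> facet(3) ts
    by (auto simp: H_def inner_diff_right)
  have "\<sigma> \<noteq> \<tau>" using facet(4) by auto
  then obtain y where y: "y \<in> \<sigma> - \<tau>" using ts by blast
  have "\<forall>x\<in>\<tau>. H (x - x0) = 0" using H_gap f_\<tau> ts by auto
  moreover have "y - x0 \<in> span ((+) (- x0) ` \<sigma>)" using y by (auto intro!: span_base)
  ultimately have "H (y - x0) = (w \<bullet> (y - x0)) * H w"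
    using linear_factor_through_facet_normal[OF \<open>linear H\<close> facet(2-4) w(3,2,4)] by blast
  moreover have "H (y - x0) < 0" using H_gap below y by auto
  moreover have "0 < w \<bullet> (y - x0)" using w(5) y facet(3) by blast
  ultimately have "H w < 0" by (simp add: mult_less_0_iff)
  then show ?thesis using w(1) by (simp add: H_def homogenize_def)
qed

lemma strictly_concave_if_cells_in_complex_of:
  assumes PP: "polyhedral_complex D PP" and "defined_on PP f" and PP_sub: "PP \<subseteq> complex_of D f"
  shows "strictly_concave PP U f"
  unfolding strictly_concave_def
proof (intro conjI allI ballI impI)
  fix k :: int and \<tau> V c
  assume \<tau>: "\<tau> \<in> restr_dim PP U k" and V: "open V \<and> V \<subseteq> U \<and> V \<inter> \<tau> \<noteq> {}"
    and c: "c \<in> pos_minkowski_weights PP V (k + 1)"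
    and ex: "\<exists>\<sigma>\<in>restr_dim PP V (k + 1). \<tau> face_of \<sigma> \<and> 0 < c \<sigma>"
  have "\<tau> \<in> complex_of D f" using \<tau> PP_sub by (auto simp: restr_dim_def)
  then obtain a b where f_\<tau>: "\<forall>x\<in>\<tau>. f x = a \<bullet> x + b" and below: "\<forall>x\<in>D - \<tau>. f x < a \<bullet> x + b"
    unfolding complex_of_def by blast
  obtain x0 where x0: "x0 \<in> V" "x0 \<in> \<tau>" using V by blast
  define S where "S = {\<sigma>\<in>restr_dim PP V (k + 1). \<tau> face_of \<sigma>}"
  have "finite S" using PP by (auto simp: S_def restr_dim_def polyhedral_complex_def)
  have "\<tau> \<in> restr_dim PP V k" using \<tau> x0 by (auto simp: restr_dim_def)
  then have "(\<Sum>\<sigma>\<in>S. c \<sigma> *\<^sub>R normal_vec \<sigma> \<tau>) = 0"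
    using c by (simp add: pos_minkowski_weights_def S_def)
  then have "homogenize a b (\<Sum>\<sigma>\<in>S. c \<sigma> *\<^sub>R normal_vec \<sigma> \<tau>) = 0"
    using linear_0[OF linear_homogenize] by simp
  then have balanced: "(\<Sum>\<sigma>\<in>S. c \<sigma> * homogenize a b (normal_vec \<sigma> \<tau>)) = 0"
    by (simp add: linear_sum[OF linear_homogenize] linear_scale[OF linear_homogenize])
  have less: "lin_part f \<sigma> (normal_vec \<sigma> \<tau>) < homogenize a b (normal_vec \<sigma> \<tau>)" if "\<sigma> \<in> S" for \<sigma>
  proof -
    have \<sigma>: "\<sigma> \<in> PP" "aff_dim \<sigma> = aff_dim \<tau> + 1" "\<tau> face_of \<sigma>"
      using that \<tau> by (auto simp: S_def restr_dim_def)
    then have "polyhedron \<sigma>" "\<sigma> \<subseteq> D" using PP by (auto simp: polyhedral_complex_def)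
    moreover obtain a' b' where "\<forall>x\<in>\<sigma>. f x = a' \<bullet> x + b'"
      using \<open>defined_on PP f\<close> \<sigma>(1) unfolding defined_on_def by blast
    ultimately show ?thesis
      using lin_part_normal_vec_less[OF _ \<sigma>(3) x0(2) \<sigma>(2) _ f_\<tau>] below by blast
  qed
  have nonneg: "\<forall>\<sigma>\<in>S. 0 \<le> c \<sigma>" using c by (auto simp: pos_minkowski_weights_def S_def)
  obtain \<sigma>0 where "\<sigma>0 \<in> S" "0 < c \<sigma>0" using ex by (auto simp: S_def)
  then have "0 < (\<Sum>\<sigma>\<in>S. c \<sigma> * (homogenize a b (normal_vec \<sigma> \<tau>) - lin_part f \<sigma> (normal_vec \<sigma> \<tau>)))"
    using less nonneg by (intro sum_pos2[OF \<open>finite S\<close> \<open>\<sigma>0 \<in> S\<close>]) (auto simp: less_imp_le)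
  then show "0 < weight_prod PP V (k + 1) f c \<tau>"
    using balanced by (simp add: weight_prod_def S_def right_diff_distrib sum_subtractf)
qed (fact \<open>defined_on PP f\<close>)

section \<open>Full-dimensional polyhedral complexes\<close>

lemma negligible_affine_hull_low_dim:
  fixes S :: "'a::euclidean_space set"
  assumes "aff_dim S < int DIM('a)"
  shows "negligible (affine hull S)"
proof (cases "S = {}")
  case False
  then obtain a where "a \<in> S" by blast
  then have a: "a \<in> affine hull S" by (rule hull_inc)
  have "dim ((+) (- a) ` S) < DIM('a)" using aff_dim_eq_dim[OF a] assms by simp
  then have "negligible (span ((+) (- a) ` S))" by (intro negligible_lowdim) simp
  then show ?thesis unfolding affine_hull_span_gen[OF a] by (rule negligible_translation)
qed simp

lemma negligible_Union_affine_hulls: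
  fixes \<S> :: "'a::euclidean_space set set"
  assumes "finite \<S>" "\<forall>S\<in>\<S>. aff_dim S < int DIM('a)"
  shows "negligible (\<Union>S\<in>\<S>. affine hull S)"
  using assms negligible_affine_hull_low_dim by (intro negligible_Union) auto

lemma full_dim_convex_interior:
  fixes S :: "'a::euclidean_space set"
  assumes "convex S" "aff_dim S = int DIM('a)"
  shows "interior S \<noteq> {}" "rel_interior S = interior S"
proof -
  show ri: "rel_interior S = interior S"
    using assms(2) aff_dim_eq_full rel_interior_interior by blast
  have "S \<noteq> {}" using assms(2) by auto
  then show "interior S \<noteq> {}" using ri rel_interior_eq_empty assms(1) by auto
qed

locale full_dim_complex =
  fixes D :: "'a::euclidean_space set" and PP :: "'a set set"
  assumes polyhedron_D: "polyhedron D" and aff_dim_D: "aff_dim D = int DIM('a)"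
    and complex: "polyhedral_complex D PP"
begin

lemma finite_PP: "finite PP"
  using complex by (simp add: polyhedral_complex_def)

lemma cell:
  assumes "\<rho> \<in> PP"
  shows "polyhedron \<rho>" "\<rho> \<subseteq> D" "closed \<rho>" "convex \<rho>"
  using assms complex polyhedron_imp_closed polyhedron_imp_convex
  unfolding polyhedral_complex_def by blast+

lemma Union_PP: "\<Union>PP = D"
  using complex by (simp add: polyhedral_complex_def)

lemma Int_cells:
  assumes "\<rho> \<in> PP" "\<rho>' \<in> PP"
  shows "\<rho> \<inter> \<rho>' \<in> PP" "(\<rho> \<inter> \<rho>') face_of \<rho>" "(\<rho> \<inter> \<rho>') face_of \<rho>'"
  using assms complex unfolding polyhedral_complex_def by blast+

lemma face_in_PP: "\<rho> \<in> PP \<Longrightarrow> \<tau> face_of \<rho> \<Longrightarrow> \<tau> \<in> PP"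
  using complex unfolding polyhedral_complex_def by blast

lemma convex_D: "convex D"
  using polyhedron_D polyhedron_imp_convex by blast

lemma interior_D: "interior D \<noteq> {}" "rel_interior D = interior D"
  using full_dim_convex_interior[OF convex_D aff_dim_D] by auto

lemma full_cells_Int_low_dim:
  assumes "\<rho> \<in> PP" "\<rho>' \<in> PP" "aff_dim \<rho> = int DIM('a)" "aff_dim \<rho>' = int DIM('a)" "\<rho> \<noteq> \<rho>'"
  shows "aff_dim (\<rho> \<inter> \<rho>') < int DIM('a)"
proof (cases "\<rho> \<inter> \<rho>' = \<rho>")
  case False
  then show ?thesis
    using face_of_aff_dim_lt[OF cell(4)[OF assms(1)] Int_cells(2)[OF assms(1,2)]] assms(3) by simp
next
  case True
  then have "\<rho> face_of \<rho>'" using Int_cells(3)[OF assms(1,2)] by simp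
  then have "aff_dim \<rho> < aff_dim \<rho>'" using face_of_aff_dim_lt[OF cell(4)[OF assms(2)]] assms(5) by blast
  then show ?thesis using assms(3,4) by simp
qed

lemma negligible_low_dim_cells:
  "negligible (\<Union>\<rho>\<in>{\<rho>\<in>PP. aff_dim \<rho> < int DIM('a)}. affine hull \<rho>)"
  using finite_PP by (intro negligible_Union_affine_hulls) auto

lemma exists_star_nbhd:
  obtains V where "open V" "z \<in> V" "\<And>\<rho>. \<rho> \<in> PP \<Longrightarrow> \<rho> \<inter> V \<noteq> {} \<Longrightarrow> z \<in> \<rho>"
proof
  show "open (- \<Union>{\<rho>\<in>PP. z \<notin> \<rho>})"
    using finite_PP cell(3) by (intro open_Compl closed_Union) auto
qed auto

lemma exists_full_cell:
  assumes "y \<in> D"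
  obtains \<rho> where "\<rho> \<in> PP" "aff_dim \<rho> = int DIM('a)" "y \<in> \<rho>"
proof -
  obtain V where V: "open V" "y \<in> V" "\<And>\<rho>. \<rho> \<in> PP \<Longrightarrow> \<rho> \<inter> V \<noteq> {} \<Longrightarrow> y \<in> \<rho>"
    using exists_star_nbhd by blast
  have "y \<in> closure (interior D)"
    using convex_closure_interior[OF convex_D interior_D(1)] polyhedron_D assms
    by (simp add: polyhedron_imp_closed closure_closed)
  then have "interior D \<inter> V \<noteq> {}" using V(1,2) by (auto simp: closure_iff_nhds_not_empty)
  then have "\<not> interior D \<inter> V \<subseteq> (\<Union>\<rho>\<in>{\<rho>\<in>PP. aff_dim \<rho> < int DIM('a)}. affine hull \<rho>)"
    using negligible_low_dim_cells open_not_negligible V(1) negligible_subset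
    by (metis open_Int open_interior)
  then obtain u \<rho> where "u \<in> V" "\<rho> \<in> PP" "u \<in> \<rho>" "\<not> aff_dim \<rho> < int DIM('a)"
    using Union_PP interior_subset by (fastforce intro: hull_inc)
  then show thesis using that V(3) aff_dim_le_DIM[of \<rho>] by fastforce
qed

lemma subset_cell_if_rel_interior:
  assumes "\<tau> \<in> PP" "z \<in> rel_interior \<tau>" "\<rho> \<in> PP" "z \<in> \<rho>"
  shows "\<tau> \<subseteq> \<rho>"
proof -
  have "(\<rho> \<inter> \<tau>) \<inter> rel_interior \<tau> \<noteq> {}" using assms(2,4) rel_interior_subset by blast
  then show ?thesis using subset_of_face_of[OF Int_cells(3)[OF assms(3,1)]] by blast
qed

lemma facet_between_full_cells:
  assumes "\<rho>1 \<in> PP" "aff_dim \<rho>1 = int DIM('a)" "\<rho>2 \<in> PP" "aff_dim \<rho>2 = int DIM('a)" "\<rho>1 \<noteq> \<rho>2"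
    and "z \<in> \<rho>1 \<inter> \<rho>2" and thick: "\<forall>\<rho>\<in>PP. z \<in> \<rho> \<longrightarrow> int DIM('a) - 1 \<le> aff_dim \<rho>"
  shows "aff_dim (\<rho>1 \<inter> \<rho>2) = int DIM('a) - 1"
  using full_cells_Int_low_dim[OF assms(1,3,2,4,5)] thick Int_cells(1)[OF assms(1,3)] assms(6) by force

lemma unique_codim_one_cell:
  assumes "\<tau> \<in> PP" "aff_dim \<tau> = int DIM('a) - 1" "z \<in> \<tau>"
    and "\<tau>' \<in> PP" "aff_dim \<tau>' = int DIM('a) - 1" "z \<in> \<tau>'"
    and thick: "\<forall>\<rho>\<in>PP. z \<in> \<rho> \<longrightarrow> int DIM('a) - 1 \<le> aff_dim \<rho>"
  shows "\<tau>' = \<tau>"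
proof -
  have "\<not> aff_dim (\<tau>' \<inter> \<tau>) < int DIM('a) - 1"
    using thick Int_cells(1)[OF assms(4,1)] assms(3,6) by force
  then show ?thesis
    using face_of_aff_dim_lt[OF cell(4)] Int_cells(2,3)[OF assms(4,1)] assms(1,2,4,5)
    by (metis Int_absorb1 Int_absorb2 Int_commute face_of_imp_subset)
qed

end

section \<open>Slopes of a strictly concave function across facets\<close>

lemma span_translate_full_dim:
  fixes S :: "'a::euclidean_space set"
  assumes "z \<in> S" "aff_dim S = int DIM('a)"
  shows "span ((+) (- z) ` S) = UNIV"
proof -
  have "dim ((+) (- z) ` S) = DIM('a)"
    using aff_dim_eq_dim[OF hull_inc[OF assms(1)]] assms(2) by simp
  then show ?thesis using dim_eq_full by blast
qed

lemma opposite_facet_normals: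
  fixes \<rho> \<tau> :: "'a::euclidean_space set"
  assumes facet: "\<tau> face_of \<rho>" "z \<in> \<tau>" "aff_dim \<rho> = aff_dim \<tau> + 1" and full: "aff_dim \<rho> = int DIM('a)"
    and w1: "norm w1 = 1" "\<forall>m\<in>span ((+) (- z) ` \<tau>). w1 \<bullet> m = 0"
    and w2: "norm w2 = 1" "\<forall>m\<in>span ((+) (- z) ` \<tau>). w2 \<bullet> m = 0"
    and sign: "w1 \<bullet> u < 0" "0 < w2 \<bullet> u"
  shows "w2 = - w1"
proof -
  have "z \<in> \<rho>" using facet(1,2) face_of_imp_subset by blast
  define q where "q = w2 - (w1 \<bullet> w2) *\<^sub>R w1"
  have "q \<in> span ((+) (- z) ` \<tau>)"
    using facet_direction_decomp[OF facet _ w1] span_translate_full_dim[OF \<open>z \<in> \<rho>\<close> full]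
    unfolding q_def by blast
  then have "w1 \<bullet> q = 0" "w2 \<bullet> q = 0" using w1(2) w2(2) by auto
  then have "q \<bullet> q = 0" unfolding q_def by (simp add: inner_diff_left)
  then have w2_eq: "w2 = (w1 \<bullet> w2) *\<^sub>R w1" unfolding q_def by simp
  then have "\<bar>w1 \<bullet> w2\<bar> = 1" using w1(1) w2(1) by (metis norm_scaleR mult.right_neutral)
  moreover have "w2 \<bullet> u = (w1 \<bullet> w2) * (w1 \<bullet> u)" by (subst w2_eq) simp
  then have "w1 \<bullet> w2 < 0" using sign by (simp add: zero_less_mult_iff)
  ultimately show ?thesis using w2_eq by simp
qed

lemma sum_weight_pair:
  fixes g :: "'b \<Rightarrow> 'c::real_vector"
  assumes "finite S" "a \<in> S" "b \<in> S" "a \<noteq> b"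
  shows "(\<Sum>x\<in>S. (if x = a \<or> x = b then 1 else 0) *\<^sub>R g x) = g a + g b"
proof -
  have "(\<Sum>x\<in>S. (if x = a \<or> x = b then 1 else 0) *\<^sub>R g x) = (\<Sum>x\<in>{x\<in>S. x = a \<or> x = b}. g x)"
    using assms(1) by (simp add: sum.inter_filter if_distrib[of "\<lambda>c. c *\<^sub>R _"] cong: if_cong)
  also have "{x\<in>S. x = a \<or> x = b} = {a, b}" using assms by auto
  finally show ?thesis using assms(4) by simp
qed

context full_dim_complex
begin

lemma facet_normals_along_line:
  assumes \<rho>1: "\<rho>1 \<in> PP" "aff_dim \<rho>1 = int DIM('a)" and \<rho>2: "\<rho>2 \<in> PP" "aff_dim \<rho>2 = int DIM('a)"
    and "\<rho>1 \<noteq> \<rho>2" and z: "z \<in> \<rho>1 \<inter> \<rho>2"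
    and thick: "\<forall>\<rho>\<in>PP. z \<in> \<rho> \<longrightarrow> int DIM('a) - 1 \<le> aff_dim \<rho>"
    and before: "s1 < 0" "z + s1 *\<^sub>R u \<in> \<rho>1 - \<rho>2" and after: "0 < s2" "z + s2 *\<^sub>R u \<in> \<rho>2 - \<rho>1"
  obtains w where "normal_vec \<rho>1 (\<rho>1 \<inter> \<rho>2) = (- w, 0)" "normal_vec \<rho>2 (\<rho>1 \<inter> \<rho>2) = (w, 0)"
    "0 < w \<bullet> u" "norm w = 1" "\<forall>m\<in>span ((+) (- z) ` (\<rho>1 \<inter> \<rho>2)). w \<bullet> m = 0"
proof -
  define \<tau> where "\<tau> = \<rho>1 \<inter> \<rho>2"
  have "aff_dim \<tau> = int DIM('a) - 1"
    using facet_between_full_cells[OF \<rho>1 \<rho>2 \<open>\<rho>1 \<noteq> \<rho>2\<close> z thick] by (simp add: \<tau>_def)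
  then have \<tau>: "\<tau> face_of \<rho>1" "\<tau> face_of \<rho>2" "z \<in> \<tau>"
    "aff_dim \<rho>1 = aff_dim \<tau> + 1" "aff_dim \<rho>2 = aff_dim \<tau> + 1"
    using Int_cells(2,3)[OF \<rho>1(1) \<rho>2(1)] z \<rho>1(2) \<rho>2(2) by (simp_all add: \<tau>_def)
  obtain w1 where w1: "normal_vec \<rho>1 \<tau> = (w1, 0)" "norm w1 = 1" "w1 \<in> span ((+) (- z) ` \<rho>1)"
    "\<forall>m\<in>span ((+) (- z) ` \<tau>). w1 \<bullet> m = 0" "\<forall>x\<in>\<tau>. \<forall>y\<in>\<rho>1 - \<tau>. 0 < w1 \<bullet> (y - x)"
    by (rule normal_vec_facet[OF cell(1)[OF \<rho>1(1)] \<tau>(1,3,4)])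
  obtain w2 where w2: "normal_vec \<rho>2 \<tau> = (w2, 0)" "norm w2 = 1" "w2 \<in> span ((+) (- z) ` \<rho>2)"
    "\<forall>m\<in>span ((+) (- z) ` \<tau>). w2 \<bullet> m = 0" "\<forall>x\<in>\<tau>. \<forall>y\<in>\<rho>2 - \<tau>. 0 < w2 \<bullet> (y - x)"
    by (rule normal_vec_facet[OF cell(1)[OF \<rho>2(1)] \<tau>(2,3,5)])
  have "z + s1 *\<^sub>R u \<in> \<rho>1 - \<tau>" "z + s2 *\<^sub>R u \<in> \<rho>2 - \<tau>"
    using before(2) after(2) by (auto simp: \<tau>_def)
  then have "0 < w1 \<bullet> ((z + s1 *\<^sub>R u) - z)" "0 < w2 \<bullet> ((z + s2 *\<^sub>R u) - z)"
    using w1(5) w2(5) \<tau>(3) by blast+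
  then have "0 < s1 * (w1 \<bullet> u)" "0 < s2 * (w2 \<bullet> u)" by simp_all
  then have "w1 \<bullet> u < 0" "0 < w2 \<bullet> u"
    using before(1) after(1) by (simp_all add: zero_less_mult_iff)
  then have "w2 = - w1"
    using opposite_facet_normals[OF \<tau>(1,3,4) \<rho>1(2) w1(2,4) w2(2,4)] by blast
  then show thesis
    using that[of w2] w1(1) w2 \<open>0 < w2 \<bullet> u\<close> by (simp add: \<tau>_def)
qed

text \<open>The only codimension-one cell meeting \<open>V\<close> is the common facet, where the two normals cancel.\<close>
lemma pair_weight_minkowski:
  assumes \<rho>1: "\<rho>1 \<in> PP" "aff_dim \<rho>1 = int DIM('a)" and \<rho>2: "\<rho>2 \<in> PP" "aff_dim \<rho>2 = int DIM('a)"
    and "\<rho>1 \<noteq> \<rho>2" and z: "z \<in> \<rho>1 \<inter> \<rho>2"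
    and thick: "\<forall>\<rho>\<in>PP. z \<in> \<rho> \<longrightarrow> int DIM('a) - 1 \<le> aff_dim \<rho>"
    and opposite: "normal_vec \<rho>2 (\<rho>1 \<inter> \<rho>2) = - normal_vec \<rho>1 (\<rho>1 \<inter> \<rho>2)"
    and star: "\<forall>\<rho>\<in>PP. \<rho> \<inter> V \<noteq> {} \<longrightarrow> z \<in> \<rho>" and "z \<in> V"
  shows "(\<lambda>\<rho>. if \<rho> = \<rho>1 \<or> \<rho> = \<rho>2 then 1 else 0) \<in> pos_minkowski_weights PP V (int DIM('a))"
  unfolding pos_minkowski_weights_def
proof (intro CollectI conjI ballI)
  define \<tau> where "\<tau> = \<rho>1 \<inter> \<rho>2"
  have \<tau>: "\<tau> \<in> PP" "aff_dim \<tau> = int DIM('a) - 1" "z \<in> \<tau>"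
    using Int_cells(1)[OF \<rho>1(1) \<rho>2(1)] facet_between_full_cells[OF \<rho>1 \<rho>2 \<open>\<rho>1 \<noteq> \<rho>2\<close> z thick] z
    by (auto simp: \<tau>_def)
  define S where "S = {\<rho>\<in>restr_dim PP V (int DIM('a)). \<tau> face_of \<rho>}"
  have "finite S" using finite_PP by (simp add: S_def restr_dim_def)
  have in_S: "\<rho>1 \<in> S" "\<rho>2 \<in> S"
    using \<rho>1 \<rho>2 Int_cells(2,3)[OF \<rho>1(1) \<rho>2(1)] z \<open>z \<in> V\<close> by (auto simp: S_def restr_dim_def \<tau>_def)
  fix \<tau>' assume "\<tau>' \<in> restr_dim PP V (int DIM('a) - 1)"
  then have "\<tau>' = \<tau>"
    using unique_codim_one_cell[OF \<tau>(1,2,3) _ _ _ thick] star by (auto simp: restr_dim_def)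
  then show "(\<Sum>\<sigma>\<in>{\<sigma>\<in>restr_dim PP V (int DIM('a)). \<tau>' face_of \<sigma>}.
      (if \<sigma> = \<rho>1 \<or> \<sigma> = \<rho>2 then 1 else 0) *\<^sub>R normal_vec \<sigma> \<tau>') = 0"
    using sum_weight_pair[OF \<open>finite S\<close> in_S \<open>\<rho>1 \<noteq> \<rho>2\<close>, of "\<lambda>\<rho>. normal_vec \<rho> \<tau>"] opposite
    by (simp add: S_def \<tau>_def)
qed simp

end

locale strictly_concave_complex = full_dim_complex +
  fixes f :: "'a::euclidean_space \<Rightarrow> real"
  assumes defined: "defined_on PP f"
    and strictly_concave: "strictly_concave PP (rel_interior D) f"
begin

lemma affine_on_cell: "\<rho> \<in> PP \<Longrightarrow> \<exists>a b. \<forall>y\<in>\<rho>. f y = a \<bullet> y + b"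
  using defined unfolding defined_on_def by blast

lemma facet_normals_lin_part_neg:
  assumes \<rho>1: "\<rho>1 \<in> PP" "aff_dim \<rho>1 = int DIM('a)" and \<rho>2: "\<rho>2 \<in> PP" "aff_dim \<rho>2 = int DIM('a)"
    and "\<rho>1 \<noteq> \<rho>2" and z: "z \<in> \<rho>1 \<inter> \<rho>2" "z \<in> interior D"
    and thick: "\<forall>\<rho>\<in>PP. z \<in> \<rho> \<longrightarrow> int DIM('a) - 1 \<le> aff_dim \<rho>"
    and opposite: "normal_vec \<rho>2 (\<rho>1 \<inter> \<rho>2) = - normal_vec \<rho>1 (\<rho>1 \<inter> \<rho>2)"
  shows "lin_part f \<rho>1 (normal_vec \<rho>1 (\<rho>1 \<inter> \<rho>2)) + lin_part f \<rho>2 (normal_vec \<rho>2 (\<rho>1 \<inter> \<rho>2)) < 0"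
proof -
  define \<tau> where "\<tau> = \<rho>1 \<inter> \<rho>2"
  define n where "n = int DIM('a)"
  define c :: "'a set \<Rightarrow> real" where "c = (\<lambda>\<rho>. if \<rho> = \<rho>1 \<or> \<rho> = \<rho>2 then 1 else 0)"
  have \<tau>: "\<tau> \<in> PP" "aff_dim \<tau> = n - 1" "z \<in> \<tau>"
    using Int_cells(1)[OF \<rho>1(1) \<rho>2(1)] facet_between_full_cells[OF \<rho>1 \<rho>2 \<open>\<rho>1 \<noteq> \<rho>2\<close> z(1) thick] z(1)
    by (auto simp: \<tau>_def n_def)
  obtain V0 where V0: "open V0" "z \<in> V0" "\<And>\<rho>. \<rho> \<in> PP \<Longrightarrow> \<rho> \<inter> V0 \<noteq> {} \<Longrightarrow> z \<in> \<rho>"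
    using exists_star_nbhd by blast
  define V where "V = V0 \<inter> interior D"
  have V: "open V" "V \<subseteq> rel_interior D" "V \<inter> \<tau> \<noteq> {}" "z \<in> V"
    using V0 z \<tau>(3) interior_D(2) by (auto simp: V_def)
  define S where "S = {\<rho>\<in>restr_dim PP V n. \<tau> face_of \<rho>}"
  have "finite S" using finite_PP by (simp add: S_def restr_dim_def)
  have in_S: "\<rho>1 \<in> S" "\<rho>2 \<in> S"
    using \<rho>1 \<rho>2 Int_cells(2,3)[OF \<rho>1(1) \<rho>2(1)] z V(4) by (auto simp: S_def restr_dim_def \<tau>_def n_def)
  have "\<forall>\<rho>\<in>PP. \<rho> \<inter> V \<noteq> {} \<longrightarrow> z \<in> \<rho>" using V0(3) by (auto simp: V_def)
  then have "c \<in> pos_minkowski_weights PP V n"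
    using pair_weight_minkowski[OF \<rho>1 \<rho>2 \<open>\<rho>1 \<noteq> \<rho>2\<close> z(1) thick opposite _ V(4)]
    by (simp add: c_def n_def)
  moreover have "\<tau> \<in> restr_dim PP (rel_interior D) (n - 1)"
    using \<tau> z interior_D(2) by (auto simp: restr_dim_def)
  moreover have "\<exists>\<sigma>\<in>restr_dim PP V n. \<tau> face_of \<sigma> \<and> 0 < c \<sigma>"
    using in_S by (auto simp: S_def c_def)
  moreover have "\<forall>\<tau>\<in>restr_dim PP (rel_interior D) (n - 1). \<forall>V. open V \<and> V \<subseteq> rel_interior D \<and> V \<inter> \<tau> \<noteq> {} \<longrightarrow>
      (\<forall>c\<in>pos_minkowski_weights PP V n. (\<exists>\<sigma>\<in>restr_dim PP V n. \<tau> face_of \<sigma> \<and> 0 < c \<sigma>) \<longrightarrow>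
        0 < weight_prod PP V n f c \<tau>)"
    using strictly_concave unfolding strictly_concave_def by (metis diff_add_cancel)
  ultimately have "0 < weight_prod PP V n f c \<tau>"
    using V by blast
  then show ?thesis
    using sum_weight_pair[OF \<open>finite S\<close> in_S \<open>\<rho>1 \<noteq> \<rho>2\<close>, of "\<lambda>\<rho>. lin_part f \<rho> (normal_vec \<rho> \<tau>)"]
    by (simp add: weight_prod_def S_def c_def \<tau>_def)
qed

lemma slope_drop_across_facet:
  assumes \<rho>1: "\<rho>1 \<in> PP" "aff_dim \<rho>1 = int DIM('a)" and \<rho>2: "\<rho>2 \<in> PP" "aff_dim \<rho>2 = int DIM('a)"
    and "\<rho>1 \<noteq> \<rho>2" and z: "z \<in> \<rho>1 \<inter> \<rho>2" "z \<in> interior D"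
    and thick: "\<forall>\<rho>\<in>PP. z \<in> \<rho> \<longrightarrow> int DIM('a) - 1 \<le> aff_dim \<rho>"
    and before: "s1 < 0" "z + s1 *\<^sub>R u \<in> \<rho>1 - \<rho>2" and after: "0 < s2" "z + s2 *\<^sub>R u \<in> \<rho>2 - \<rho>1"
  shows "lin_part f \<rho>2 (u, 0) < lin_part f \<rho>1 (u, 0)"
proof -
  define \<tau> where "\<tau> = \<rho>1 \<inter> \<rho>2"
  obtain w where w: "normal_vec \<rho>1 \<tau> = (- w, 0)" "normal_vec \<rho>2 \<tau> = (w, 0)" "0 < w \<bullet> u"
    "norm w = 1" "\<forall>m\<in>span ((+) (- z) ` \<tau>). w \<bullet> m = 0"
    using facet_normals_along_line[OF \<rho>1 \<rho>2 \<open>\<rho>1 \<noteq> \<rho>2\<close> z(1) thick before after]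
    unfolding \<tau>_def by blast
  then have "lin_part f \<rho>1 (- w, 0) + lin_part f \<rho>2 (w, 0) < 0"
    using facet_normals_lin_part_neg[OF \<rho>1 \<rho>2 \<open>\<rho>1 \<noteq> \<rho>2\<close> z thick] by (simp add: \<tau>_def)
  have "aff_dim \<tau> = int DIM('a) - 1"
    using facet_between_full_cells[OF \<rho>1 \<rho>2 \<open>\<rho>1 \<noteq> \<rho>2\<close> z(1) thick] by (simp add: \<tau>_def)
  then have \<tau>: "\<tau> face_of \<rho>2" "z \<in> \<tau>" "aff_dim \<rho>2 = aff_dim \<tau> + 1"
    using Int_cells(3)[OF \<rho>1(1) \<rho>2(1)] z(1) \<rho>2(2) by (simp_all add: \<tau>_def)
  obtain a1 b1 a2 b2 where f1: "\<forall>y\<in>\<rho>1. f y = a1 \<bullet> y + b1" and f2: "\<forall>y\<in>\<rho>2. f y = a2 \<bullet> y + b2"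
    using affine_on_cell \<rho>1(1) \<rho>2(1) by metis
  define H where "H v = lin_part f \<rho>1 (v, 0) - lin_part f \<rho>2 (v, 0)" for v
  have "linear H"
    unfolding H_def by (intro linear_compose_sub linear_slice lin_part_affine[OF f1] lin_part_affine[OF f2])
  moreover have "\<forall>y\<in>\<tau>. H (y - z) = 0"
  proof
    fix y assume "y \<in> \<tau>"
    then have "y \<in> \<rho>1" "y \<in> \<rho>2" "z \<in> \<rho>1" "z \<in> \<rho>2" using \<tau>(2) by (auto simp: \<tau>_def)
    then show "H (y - z) = 0" using lin_part_diff[OF f1] lin_part_diff[OF f2] by (simp add: H_def)
  qed
  moreover have "u \<in> span ((+) (- z) ` \<rho>2)" "w \<in> span ((+) (- z) ` \<rho>2)"
    using span_translate_full_dim[OF _ \<rho>2(2)] z(1) by blast+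
  ultimately have "H u = (w \<bullet> u) * H w"
    using linear_factor_through_facet_normal[OF _ \<tau> _ w(4,5)] by blast
  moreover have "lin_part f \<rho>1 (- w, 0) = - lin_part f \<rho>1 (w, 0)"
    using linear_neg[OF linear_slice[OF lin_part_affine(1)[OF f1]]] by simp
  ultimately have "0 < H u"
    using w(3) \<open>lin_part f \<rho>1 (- w, 0) + lin_part f \<rho>2 (w, 0) < 0\<close>
    by (simp add: H_def zero_less_mult_iff)
  then show ?thesis by (simp add: H_def)
qed

end

locale generic_segment = strictly_concave_complex +
  fixes \<sigma> :: "'a::euclidean_space set" and a\<^sub>\<sigma> :: 'a and b\<^sub>\<sigma> :: real and x p :: 'a
  assumes \<sigma>: "\<sigma> \<in> PP" "aff_dim \<sigma> = int DIM('a)" and f_\<sigma>: "\<forall>y\<in>\<sigma>. f y = a\<^sub>\<sigma> \<bullet> y + b\<^sub>\<sigma>"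
    and x: "x \<in> D" "x \<notin> \<sigma>" and p: "p \<in> interior \<sigma>"
    and avoids_thin_cells: "\<And>t \<rho>. 0 < t \<Longrightarrow> t \<le> 1 \<Longrightarrow> \<rho> \<in> PP \<Longrightarrow> aff_dim \<rho> < int DIM('a) - 1
      \<Longrightarrow> x + t *\<^sub>R (p - x) \<notin> \<rho>"
    and meets_low_cells_once: "\<And>t t' \<rho>. \<rho> \<in> PP \<Longrightarrow> aff_dim \<rho> < int DIM('a)
      \<Longrightarrow> x + t *\<^sub>R (p - x) \<in> \<rho> \<Longrightarrow> x + t' *\<^sub>R (p - x) \<in> \<rho> \<Longrightarrow> t = t'"
begin

definition \<gamma> :: "real \<Rightarrow> 'a" where "\<gamma> t = x + t *\<^sub>R (p - x)"

definition crossings :: "real set" where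
  "crossings = {t \<in> {0..1}. \<exists>\<rho>\<in>PP. aff_dim \<rho> < int DIM('a) \<and> \<gamma> t \<in> \<rho>}"

definition slope :: "'a set \<Rightarrow> real" where "slope \<rho> = lin_part f \<rho> (p - x, 0)"

lemma \<gamma>_0: "\<gamma> 0 = x" and \<gamma>_1: "\<gamma> 1 = p"
  by (simp_all add: \<gamma>_def)

lemma \<gamma>_diff: "\<gamma> t' - \<gamma> t = (t' - t) *\<^sub>R (p - x)"
  by (simp add: \<gamma>_def algebra_simps)

lemma \<gamma>_between:
  assumes "convex S" "\<gamma> a \<in> S" "\<gamma> b \<in> S" "a \<le> t" "t \<le> b"
  shows "\<gamma> t \<in> S"
proof (cases "a = b")
  case False
  define u where "u = (t - a) / (b - a)"
  have u: "0 \<le> u" "u \<le> 1" using assms False by (auto simp: u_def field_simps)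
  have "u * (b - a) = t - a" using False by (simp add: u_def)
  then have "t = (1 - u) * a + u * b" by (simp add: algebra_simps)
  moreover have "\<gamma> ((1 - u) * a + u * b) = (1 - u) *\<^sub>R \<gamma> a + u *\<^sub>R \<gamma> b"
    by (simp add: \<gamma>_def algebra_simps)
  ultimately have "\<gamma> t = (1 - u) *\<^sub>R \<gamma> a + u *\<^sub>R \<gamma> b" by simp
  then show ?thesis using convexD[OF assms(1-3)] u by simp
qed (use assms in simp)

lemma p_in_\<sigma>: "p \<in> \<sigma>"
  using p interior_subset by blast

lemma \<gamma>_in_D: "t \<in> {0..1} \<Longrightarrow> \<gamma> t \<in> D"
  using \<gamma>_between[OF convex_D, of 0 1 t] x(1) cell(2)[OF \<sigma>(1)] p_in_\<sigma> by (auto simp: \<gamma>_0 \<gamma>_1)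

lemma \<gamma>_in_interior_D:
  assumes "0 < t" "t \<le> 1"
  shows "\<gamma> t \<in> interior D"
proof -
  have p_int: "p \<in> interior D" using interior_mono[OF cell(2)[OF \<sigma>(1)]] p by blast
  show ?thesis
  proof (cases "t = 1")
    case False
    have "\<gamma> t \<in> open_segment p x"
      using p_in_\<sigma> x(2) assms False unfolding in_segment
      by (intro conjI exI[of _ "1 - t"]) (auto simp: \<gamma>_def algebra_simps)
    then show ?thesis
      using in_interior_closure_convex_segment[OF convex_D p_int] x(1) closure_subset by blast
  qed (use p_int \<gamma>_1 in simp)
qed

lemma finite_crossings: "finite crossings"
proof -
  have "crossings \<subseteq> (\<Union>\<rho>\<in>{\<rho>\<in>PP. aff_dim \<rho> < int DIM('a)}. {t. \<gamma> t \<in> \<rho>})"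
    by (auto simp: crossings_def)
  moreover have "finite {t. \<gamma> t \<in> \<rho>}" if "\<rho> \<in> PP" "aff_dim \<rho> < int DIM('a)" for \<rho>
  proof -
    have "{t. \<gamma> t \<in> \<rho>} \<subseteq> {t0}" if "\<gamma> t0 \<in> \<rho>" for t0
      using meets_low_cells_once[OF \<open>\<rho> \<in> PP\<close> \<open>aff_dim \<rho> < _\<close>] that by (auto simp: \<gamma>_def)
    then show ?thesis by (metis finite.emptyI finite_insert finite_subset subsetI empty_iff mem_Collect_eq)
  qed
  ultimately show ?thesis using finite_PP by (auto intro: finite_subset)
qed

lemma full_cell_on_uncrossed_interval:
  assumes "0 \<le> a" "a < b" "b \<le> 1" and uncrossed: "\<forall>t\<in>crossings. \<not> (a < t \<and> t < b)"
  obtains \<rho> where "\<rho> \<in> PP" "aff_dim \<rho> = int DIM('a)" "\<gamma> ` {a..b} \<subseteq> \<rho>"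
proof -
  define I where "I = {a<..<b}"
  have full: "aff_dim \<rho> = int DIM('a)" if "t \<in> I" "\<rho> \<in> PP" "\<gamma> t \<in> \<rho>" for t \<rho>
    using that uncrossed assms aff_dim_le_DIM[of \<rho>] by (fastforce simp: I_def crossings_def)
  have covered: "\<exists>\<rho>\<in>PP. \<gamma> t \<in> \<rho>" if "t \<in> I" for t
    using that \<gamma>_in_D Union_PP assms by (fastforce simp: I_def)
  obtain \<rho>0 where \<rho>0: "\<rho>0 \<in> PP" "\<gamma> ((a + b) / 2) \<in> \<rho>0"
    using covered[of "(a + b) / 2"] assms by (auto simp: I_def)
  have "continuous_on UNIV \<gamma>" unfolding \<gamma>_def by (intro continuous_intros)
  then have closed_vimage: "closed (\<gamma> -` \<rho>)" if "\<rho> \<in> PP" for \<rho>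
    using cell(3)[OF that] by (simp add: continuous_closed_vimage continuous_on_eq_continuous_at)
  define A where "A = \<gamma> -` \<rho>0"
  define B where "B = (\<Union>\<rho>\<in>{\<rho>\<in>PP. \<rho> \<noteq> \<rho>0}. \<gamma> -` \<rho>)"
  \<comment> \<open>two distinct full cells meet in a lower-dimensional cell, which \<open>I\<close> does not cross\<close>
  have "A \<inter> B \<inter> I = {}"
  proof (rule ccontr)
    assume "A \<inter> B \<inter> I \<noteq> {}"
    then obtain t \<rho> where t: "t \<in> I" "\<gamma> t \<in> \<rho>0" "\<rho> \<in> PP" "\<rho> \<noteq> \<rho>0" "\<gamma> t \<in> \<rho>"
      by (auto simp: A_def B_def)
    then have "aff_dim (\<rho>0 \<inter> \<rho>) < int DIM('a)"
      using full_cells_Int_low_dim[OF \<rho>0(1) t(3)] full \<rho>0(1) by auto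
    moreover have "aff_dim (\<rho>0 \<inter> \<rho>) = int DIM('a)"
      using full[OF t(1) Int_cells(1)[OF \<rho>0(1) t(3)]] t by blast
    ultimately show False by simp
  qed
  moreover have "I \<subseteq> A \<union> B" using covered by (auto simp: A_def B_def)
  moreover have "closed A" "closed B"
    using closed_vimage \<rho>0(1) finite_PP by (auto simp: A_def B_def)
  moreover have "A \<inter> I \<noteq> {}" using \<rho>0(2) assms by (auto simp: A_def I_def)
  ultimately have "I \<subseteq> A"
    using connected_closedD[of I A B] by (auto simp: I_def)
  then have "closure I \<subseteq> A" using \<open>closed A\<close> closure_minimal by blast
  then have "\<gamma> ` {a..b} \<subseteq> \<rho>0" using assms(2) by (auto simp: I_def A_def)
  moreover have "aff_dim \<rho>0 = int DIM('a)"
    using full[of "(a + b) / 2"] \<rho>0 assms by (auto simp: I_def)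
  ultimately show thesis using that \<rho>0(1) by blast
qed

lemma f_\<gamma>_diff:
  assumes "\<rho> \<in> PP" "\<gamma> t \<in> \<rho>" "\<gamma> t' \<in> \<rho>"
  shows "f (\<gamma> t') - f (\<gamma> t) = (t' - t) * slope \<rho>"
proof -
  obtain a b where f_\<rho>: "\<forall>y\<in>\<rho>. f y = a \<bullet> y + b" using affine_on_cell[OF assms(1)] by blast
  have "f (\<gamma> t') - f (\<gamma> t) = lin_part f \<rho> ((t' - t) *\<^sub>R (p - x), 0)"
    using lin_part_diff[OF f_\<rho> assms(2,3)] by (simp add: \<gamma>_diff)
  also have "\<dots> = (t' - t) * slope \<rho>"
    using linear_scale[OF linear_slice[OF lin_part_affine(1)[OF f_\<rho>]]] by (simp add: slope_def)
  finally show ?thesis .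
qed

lemma \<gamma>_near_one: "\<exists>\<delta>>0. \<forall>t. 1 - \<delta> < t \<and> t \<le> 1 \<longrightarrow> \<gamma> t \<in> interior \<sigma>"
proof -
  have "continuous_on UNIV \<gamma>" unfolding \<gamma>_def by (intro continuous_intros)
  then have "open (\<gamma> -` interior \<sigma>)"
    by (simp add: continuous_on_open_vimage)
  moreover have "1 \<in> \<gamma> -` interior \<sigma>" using p \<gamma>_1 by simp
  ultimately obtain \<delta> where "\<delta> > 0" "ball 1 \<delta> \<subseteq> \<gamma> -` interior \<sigma>"
    using open_contains_ball by blast
  then show ?thesis by (intro exI[of _ \<delta>]) (auto simp: subset_iff dist_real_def)
qed

lemma slope_\<sigma>: "slope \<sigma> = a\<^sub>\<sigma> \<bullet> (p - x)"
proof -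
  obtain \<delta> where "\<delta> > 0" "\<forall>t. 1 - \<delta> < t \<and> t \<le> 1 \<longrightarrow> \<gamma> t \<in> interior \<sigma>"
    using \<gamma>_near_one by blast
  then have in_\<sigma>: "\<gamma> (1 - \<delta> / 2) \<in> \<sigma>" using interior_subset by fastforce
  have "(\<delta> / 2) * slope \<sigma> = f (\<gamma> 1) - f (\<gamma> (1 - \<delta> / 2))"
    using f_\<gamma>_diff[OF \<sigma>(1) in_\<sigma>, of 1] p_in_\<sigma> \<gamma>_1 by simp
  also have "\<dots> = (\<delta> / 2) * (a\<^sub>\<sigma> \<bullet> (p - x))"
    using f_\<sigma> in_\<sigma> p_in_\<sigma> \<gamma>_diff[of 1 "1 - \<delta> / 2"]
    by (simp add: \<gamma>_1 inner_diff_right[symmetric])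
  finally show ?thesis using \<open>\<delta> > 0\<close> by simp
qed

lemma affine_\<sigma>_along_\<gamma>: "a\<^sub>\<sigma> \<bullet> \<gamma> t' - a\<^sub>\<sigma> \<bullet> \<gamma> t = (t' - t) * slope \<sigma>"
  using \<gamma>_diff[of t' t] slope_\<sigma> by (simp add: inner_diff_right[symmetric])

lemma slope_decreases_at_crossing:
  assumes \<rho>1: "\<rho>1 \<in> PP" "aff_dim \<rho>1 = int DIM('a)" and \<rho>2: "\<rho>2 \<in> PP" "aff_dim \<rho>2 = int DIM('a)"
    and "\<rho>1 \<noteq> \<rho>2" and t: "0 \<le> a" "a < b" "b < c" "c \<le> 1"
    and "\<gamma> ` {a..b} \<subseteq> \<rho>1" "\<gamma> ` {b..c} \<subseteq> \<rho>2"
  shows "slope \<rho>2 < slope \<rho>1"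
proof -
  have z: "\<gamma> b \<in> \<rho>1 \<inter> \<rho>2" "\<gamma> b \<in> interior D"
    using assms \<gamma>_in_interior_D[of b] by auto
  have thick: "\<forall>\<rho>\<in>PP. \<gamma> b \<in> \<rho> \<longrightarrow> int DIM('a) - 1 \<le> aff_dim \<rho>"
    using avoids_thin_cells[of b] t by (force simp: \<gamma>_def)
  have low: "aff_dim (\<rho>1 \<inter> \<rho>2) < int DIM('a)" "\<rho>1 \<inter> \<rho>2 \<in> PP"
    using full_cells_Int_low_dim[OF \<rho>1(1) \<rho>2(1) \<rho>1(2) \<rho>2(2) \<open>\<rho>1 \<noteq> \<rho>2\<close>] Int_cells(1)[OF \<rho>1(1) \<rho>2(1)]
    by auto
  have "\<gamma> a \<notin> \<rho>2"
  proof
    assume "\<gamma> a \<in> \<rho>2"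
    then have "\<gamma> a \<in> \<rho>1 \<inter> \<rho>2" using assms(10) t by (auto simp: image_subset_iff)
    then show False using meets_low_cells_once[OF low(2,1), of a b] z(1) t by (simp add: \<gamma>_def)
  qed
  moreover have "\<gamma> c \<notin> \<rho>1"
  proof
    assume "\<gamma> c \<in> \<rho>1"
    then have "\<gamma> c \<in> \<rho>1 \<inter> \<rho>2" using assms(11) t by (auto simp: image_subset_iff)
    then show False using meets_low_cells_once[OF low(2,1), of c b] z(1) t by (simp add: \<gamma>_def)
  qed
  moreover have "\<gamma> a \<in> \<rho>1" "\<gamma> c \<in> \<rho>2" using assms(10,11) t by (auto simp: image_subset_iff)
  moreover have "\<gamma> a = \<gamma> b + (a - b) *\<^sub>R (p - x)" "\<gamma> c = \<gamma> b + (c - b) *\<^sub>R (p - x)"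
    by (simp_all add: \<gamma>_def algebra_simps)
  ultimately have "\<gamma> b + (a - b) *\<^sub>R (p - x) \<in> \<rho>1 - \<rho>2" "\<gamma> b + (c - b) *\<^sub>R (p - x) \<in> \<rho>2 - \<rho>1"
    by simp_all
  moreover have "a - b < 0" "0 < c - b" using t by simp_all
  ultimately show ?thesis
    unfolding slope_def using slope_drop_across_facet[OF \<rho>1 \<rho>2 \<open>\<rho>1 \<noteq> \<rho>2\<close> z thick] by blast
qed

lemma exists_next_piece:
  assumes "0 \<le> a" "a < 1"
  obtains b \<rho> where "a < b" "b \<le> 1" "\<rho> \<in> PP" "aff_dim \<rho> = int DIM('a)" "\<gamma> ` {a..b} \<subseteq> \<rho>"
    "\<forall>t\<in>crossings. \<not> (a < t \<and> t < b)" "b < 1 \<Longrightarrow> b \<in> crossings"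
proof -
  define b where "b = Min (insert 1 {t\<in>crossings. a < t})"
  have fin: "finite (insert 1 {t\<in>crossings. a < t})" using finite_crossings by simp
  have b: "b \<in> insert 1 {t\<in>crossings. a < t}" "b \<le> 1"
    unfolding b_def using fin by (rule Min_in, simp, rule Min_le, simp)
  have uncrossed: "\<forall>t\<in>crossings. \<not> (a < t \<and> t < b)"
    using Min_le[OF fin] by (fastforce simp: b_def)
  have "a < b" using b assms by auto
  obtain \<rho> where "\<rho> \<in> PP" "aff_dim \<rho> = int DIM('a)" "\<gamma> ` {a..b} \<subseteq> \<rho>"
    using full_cell_on_uncrossed_interval[OF assms(1) \<open>a < b\<close> b(2) uncrossed] by blast
  then show thesis using that[of b \<rho>] \<open>a < b\<close> b uncrossed by auto
qed

lemma piece_ends_before_one: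
  assumes "\<gamma> a \<notin> \<sigma>" "0 \<le> a" "a < b" "b \<le> 1" "\<rho> \<in> PP" "aff_dim \<rho> = int DIM('a)"
    and "\<gamma> ` {a..b} \<subseteq> \<rho>" "\<forall>t\<in>crossings. \<not> (a < t \<and> t < b)"
  shows "b < 1"
proof (rule ccontr)
  assume "\<not> b < 1"
  obtain \<delta> where "\<delta> > 0" "\<forall>t. 1 - \<delta> < t \<and> t \<le> 1 \<longrightarrow> \<gamma> t \<in> interior \<sigma>"
    using \<gamma>_near_one by blast
  define t where "t = (max a (1 - \<delta>) + 1) / 2"
  have t: "a < t" "t < 1" "1 - \<delta> < t" using assms \<open>\<delta> > 0\<close> by (auto simp: t_def)
  then have "\<gamma> t \<in> interior \<sigma>" "\<gamma> t \<in> \<rho>"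
    using \<open>\<forall>t. _\<close> assms(7) \<open>\<not> b < 1\<close> by auto
  then have "\<gamma> t \<in> \<sigma> \<inter> \<rho>" using interior_subset by blast
  have "\<gamma> a \<in> \<rho>" using assms(3,7) by auto
  then have "\<rho> \<noteq> \<sigma>" using assms(1) by auto
  then have "t \<in> crossings"
    using full_cells_Int_low_dim[OF assms(5) \<sigma>(1) assms(6) \<sigma>(2)] Int_cells(1)[OF assms(5) \<sigma>(1)]
      \<open>\<gamma> t \<in> \<sigma> \<inter> \<rho>\<close> t(1,2) assms(2)
    by (auto simp: crossings_def)
  then show False using assms(4,8) t(1,2) \<open>\<not> b < 1\<close> by auto
qed

text \<open>Along \<open>\<gamma>\<close> the slopes of \<open>f\<close> strictly decrease at each crossing, so walking back from the
  first point in \<open>\<sigma>\<close> the values of \<open>f\<close> fall strictly below the affine function of \<open>\<sigma>\<close>.\<close>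
lemma below_\<sigma>_before_entering:
  assumes "0 \<le> a" "a < 1" "\<gamma> a \<notin> \<sigma>"
  shows "f (\<gamma> a) < a\<^sub>\<sigma> \<bullet> \<gamma> a + b\<^sub>\<sigma> \<and> (\<exists>b \<rho>. a < b \<and> b \<le> 1 \<and> \<rho> \<in> PP \<and>
           aff_dim \<rho> = int DIM('a) \<and> \<gamma> ` {a..b} \<subseteq> \<rho> \<and> slope \<sigma> < slope \<rho>)"
  using assms
proof (induction "card {t\<in>crossings. a < t}" arbitrary: a rule: less_induct)
  case less
  obtain b \<rho> where piece: "a < b" "b \<le> 1" "\<rho> \<in> PP" "aff_dim \<rho> = int DIM('a)" "\<gamma> ` {a..b} \<subseteq> \<rho>"
    "\<forall>t\<in>crossings. \<not> (a < t \<and> t < b)" "b < 1 \<Longrightarrow> b \<in> crossings"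
    using exists_next_piece less.prems(1,2) by metis
  have "b < 1" using piece_ends_before_one[OF less.prems(3,1) piece(1-6)] .
  have "\<gamma> a \<in> \<rho>" "\<gamma> b \<in> \<rho>" using piece(1,5) by auto
  then have "\<rho> \<noteq> \<sigma>" using less.prems(3) by auto
  have "slope \<sigma> < slope \<rho> \<and> f (\<gamma> b) \<le> a\<^sub>\<sigma> \<bullet> \<gamma> b + b\<^sub>\<sigma>"
  proof (cases "\<gamma> b \<in> \<sigma>")
    case True
    then have "\<gamma> ` {b..1} \<subseteq> \<sigma>"
      using \<gamma>_between[OF cell(4)[OF \<sigma>(1)] True, of 1] p_in_\<sigma> \<gamma>_1 by auto
    then show ?thesis
      using slope_decreases_at_crossing[OF piece(3,4) \<sigma> \<open>\<rho> \<noteq> \<sigma>\<close> less.prems(1) piece(1) \<open>b < 1\<close>]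
        piece(5) True f_\<sigma> by simp
  next
    case False
    have "{t\<in>crossings. b < t} \<subset> {t\<in>crossings. a < t}" using piece(1,7) \<open>b < 1\<close> by auto
    then have "card {t\<in>crossings. b < t} < card {t\<in>crossings. a < t}"
      using finite_crossings by (simp add: psubset_card_mono)
    then obtain c \<rho>' where IH: "f (\<gamma> b) < a\<^sub>\<sigma> \<bullet> \<gamma> b + b\<^sub>\<sigma>" "b < c" "c \<le> 1" "\<rho>' \<in> PP"
      "aff_dim \<rho>' = int DIM('a)" "\<gamma> ` {b..c} \<subseteq> \<rho>'" "slope \<sigma> < slope \<rho>'"
      using less.hyps[of b] False \<open>b < 1\<close> piece(1) less.prems(1) by auto
    have "slope \<rho>' \<le> slope \<rho>"
      using slope_decreases_at_crossing[OF piece(3,4) IH(4,5) _ less.prems(1) piece(1) IH(2,3) piece(5) IH(6)]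
      by (cases "\<rho> = \<rho>'") auto
    then show ?thesis using IH by simp
  qed
  then have "f (\<gamma> a) < a\<^sub>\<sigma> \<bullet> \<gamma> a + b\<^sub>\<sigma>"
    using f_\<gamma>_diff[OF piece(3) \<open>\<gamma> a \<in> \<rho>\<close> \<open>\<gamma> b \<in> \<rho>\<close>] affine_\<sigma>_along_\<gamma>[of b a] piece(1)
    by (smt (verit) mult_strict_left_mono)
  then show ?case using piece \<open>slope \<sigma> < slope \<rho> \<and> _\<close> by blast
qed

lemma below_\<sigma>_at_start: "f x < a\<^sub>\<sigma> \<bullet> x + b\<^sub>\<sigma>"
  using below_\<sigma>_before_entering[of 0] x(2) by (simp add: \<gamma>_0)

end

section \<open>Concavity and the cells of a strictly concave function\<close>

lemma line_point_in_affine_hull: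
  fixes x v :: "'a::real_vector"
  assumes "x + s *\<^sub>R v \<in> S" "x + t *\<^sub>R v \<in> S" "s \<noteq> t"
  shows "x + r *\<^sub>R v \<in> affine hull S"
proof -
  define l where "l = (r - s) / (t - s)"
  have "(1 - l) *\<^sub>R (x + s *\<^sub>R v) + l *\<^sub>R (x + t *\<^sub>R v) \<in> affine hull S"
    using assms by (intro mem_affine) (auto intro: hull_inc)
  moreover have "s + l * (t - s) = r" using assms(3) by (simp add: l_def)
  then have "(1 - l) *\<^sub>R (x + s *\<^sub>R v) + l *\<^sub>R (x + t *\<^sub>R v) = x + r *\<^sub>R v"
    by (simp add: algebra_simps) (metis scaleR_add_left add.commute)
  ultimately show ?thesis by simp
qed

lemma affine_combination_inner:
  assumes "u + v = 1"
  shows "a \<bullet> (u *\<^sub>R x + v *\<^sub>R y) + b = u * (a \<bullet> x + b) + v * (a \<bullet> y + b)"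
proof -
  have "u * b + v * b = b" using assms by (metis distrib_right mult_1)
  then show ?thesis by (simp add: inner_add_right algebra_simps)
qed

lemma concave_on_if_affine_majorants:
  assumes "convex D" and major: "\<And>y. y \<in> D \<Longrightarrow> \<exists>a b. f y = a \<bullet> y + b \<and> (\<forall>z\<in>D. f z \<le> a \<bullet> z + b)"
  shows "concave_on D f"
  unfolding concave_on_iff
proof (intro conjI ballI allI impI)
  fix x y and u v :: real
  assume xy: "x \<in> D" "y \<in> D" and uv: "0 \<le> u" "0 \<le> v" "u + v = 1"
  obtain a b where ab: "f (u *\<^sub>R x + v *\<^sub>R y) = a \<bullet> (u *\<^sub>R x + v *\<^sub>R y) + b" "\<forall>z\<in>D. f z \<le> a \<bullet> z + b"
    using major convexD[OF assms(1) xy uv] by blast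
  have "u * f x + v * f y \<le> u * (a \<bullet> x + b) + v * (a \<bullet> y + b)"
    using ab(2) xy uv by (intro add_mono mult_left_mono) auto
  also have "\<dots> = f (u *\<^sub>R x + v *\<^sub>R y)"
    using ab(1) affine_combination_inner[OF uv(3), of a x y b] by simp
  finally show "u * f x + v * f y \<le> f (u *\<^sub>R x + v *\<^sub>R y)" .
qed (fact \<open>convex D\<close>)

context strictly_concave_complex
begin

text \<open>The segment from \<open>x\<close> to a point \<open>p\<close> of \<open>interior \<sigma>\<close> avoiding a null set of hyperplanes and
  cones misses all cells of codimension \<open>\<ge> 2\<close> and meets each lower-dimensional cell at most once.\<close>
lemma below_full_cell:
  assumes \<sigma>: "\<sigma> \<in> PP" "aff_dim \<sigma> = int DIM('a)" and f_\<sigma>: "\<forall>y\<in>\<sigma>. f y = a \<bullet> y + b"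
    and x: "x \<in> D" "x \<notin> \<sigma>"
  shows "f x < a \<bullet> x + b"
proof -
  define thin where "thin = {\<rho>\<in>PP. aff_dim \<rho> < int DIM('a) - 1}"
  define Bad where "Bad = (\<Union>\<rho>\<in>{\<rho>\<in>PP. aff_dim \<rho> < int DIM('a)}. affine hull \<rho>)
    \<union> (\<Union>S\<in>insert x ` thin. affine hull S)"
  have "aff_dim (insert x \<rho>) < int DIM('a)" if "\<rho> \<in> thin" for \<rho>
    using that aff_dim_insert[of x \<rho>] by (auto simp: thin_def split: if_splits)
  then have "negligible Bad"
    unfolding Bad_def using negligible_low_dim_cells finite_PP
    by (intro negligible_Un negligible_Union_affine_hulls) (auto simp: thin_def)
  moreover have "interior \<sigma> \<noteq> {}" using full_dim_convex_interior[OF cell(4)[OF \<sigma>(1)] \<sigma>(2)] by simp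
  ultimately obtain p where p: "p \<in> interior \<sigma>" "p \<notin> Bad"
    using open_not_negligible[of "interior \<sigma>"] negligible_subset by blast
  have p_eq: "x + 1 *\<^sub>R (p - x) = p" by simp
  interpret generic_segment D PP f \<sigma> a b x p
  proof
    fix t :: real and \<rho> assume "0 < t" "t \<le> 1" "\<rho> \<in> PP" "aff_dim \<rho> < int DIM('a) - 1"
    then show "x + t *\<^sub>R (p - x) \<notin> \<rho>"
      using line_point_in_affine_hull[of x 0 "p - x" "insert x \<rho>" t 1] p(2)
      by (auto simp: Bad_def thin_def)
  next
    fix t t' :: real and \<rho> assume "\<rho> \<in> PP" "aff_dim \<rho> < int DIM('a)"
      "x + t *\<^sub>R (p - x) \<in> \<rho>" "x + t' *\<^sub>R (p - x) \<in> \<rho>"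
    then show "t = t'"
      using line_point_in_affine_hull[of x t "p - x" \<rho> t' 1] p(2) by (auto simp: Bad_def)
  qed (use \<sigma> f_\<sigma> x p in auto)
  show ?thesis by (rule below_\<sigma>_at_start)
qed

lemma below_full_cell_le:
  assumes "\<sigma> \<in> PP" "aff_dim \<sigma> = int DIM('a)" "\<forall>y\<in>\<sigma>. f y = a \<bullet> y + b" "y \<in> D"
  shows "f y \<le> a \<bullet> y + b"
  using below_full_cell[OF assms(1-4)] assms(3) by (cases "y \<in> \<sigma>") auto

lemma concave: "concave_on D f"
proof (rule concave_on_if_affine_majorants[OF convex_D])
  fix y assume "y \<in> D"
  then obtain \<rho> where \<rho>: "\<rho> \<in> PP" "aff_dim \<rho> = int DIM('a)" "y \<in> \<rho>" by (rule exists_full_cell)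
  then obtain a b where "\<forall>z\<in>\<rho>. f z = a \<bullet> z + b" using affine_on_cell by blast
  then show "\<exists>a b. f y = a \<bullet> y + b \<and> (\<forall>z\<in>D. f z \<le> a \<bullet> z + b)"
    using below_full_cell_le[OF \<rho>(1,2)] \<rho>(3) by blast
qed

end

lemma polyhedron_obtain_inequalities:
  fixes D :: "'a::euclidean_space set"
  assumes "polyhedron D"
  obtains H where "finite H" "D = {y. \<forall>(a, b)\<in>H. a \<bullet> y \<le> b}"
proof -
  obtain F where F: "finite F" "D = \<Inter>F" "\<forall>h\<in>F. \<exists>a b. a \<noteq> 0 \<and> h = {x. a \<bullet> x \<le> b}"
    using assms unfolding polyhedron_def by blast
  then have "\<forall>h\<in>F. \<exists>ab. h = {x. fst ab \<bullet> x \<le> snd ab}" by force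
  then obtain g where g: "\<forall>h\<in>F. h = {x. fst (g h) \<bullet> x \<le> snd (g h)}" by metis
  have "D = {y. \<forall>(a, b)\<in>g ` F. a \<bullet> y \<le> b}"
  proof (intro set_eqI)
    fix y
    have "y \<in> D \<longleftrightarrow> (\<forall>h\<in>F. y \<in> h)" using F(2) by blast
    also have "\<dots> \<longleftrightarrow> (\<forall>h\<in>F. fst (g h) \<bullet> y \<le> snd (g h))"
      using g by blast
    finally show "y \<in> D \<longleftrightarrow> y \<in> {y. \<forall>(a, b)\<in>g ` F. a \<bullet> y \<le> b}" by (simp add: case_prod_beta)
  qed
  then show thesis using that F(1) by blast
qed

lemma rel_interior_on_supporting_hyperplane:
  fixes \<tau> :: "'a::euclidean_space set"
  assumes "convex \<tau>" "\<tau> \<subseteq> {x. a \<bullet> x \<le> b}" "z \<in> rel_interior \<tau>" "a \<bullet> z = b" "y \<in> \<tau>"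
  shows "a \<bullet> y = b"
proof -
  obtain e where e: "1 < e" "(1 - e) *\<^sub>R y + e *\<^sub>R z \<in> \<tau>"
    using convex_rel_interior_iff[OF assms(1)] assms(3,5) by blast
  then have "(1 - e) * (a \<bullet> y) + e * b \<le> b" using assms(2,4) by (auto simp: inner_add_right)
  then have "(1 - e) * (a \<bullet> y - b) \<le> 0" by (simp add: algebra_simps)
  then have "b \<le> a \<bullet> y" using e(1) by (simp add: mult_le_0_iff)
  then show ?thesis using assms(2,5) by fastforce
qed

lemma in_open_segment_extension:
  fixes y z :: "'a::real_vector"
  assumes "y \<noteq> z" "1 < e"
  shows "z \<in> open_segment y ((1 - e) *\<^sub>R y + e *\<^sub>R z)"
  unfolding in_segment
proof (intro conjI exI[of _ "1 / e"])
  have "(1 - e) *\<^sub>R y + e *\<^sub>R z - y = e *\<^sub>R (z - y)" by (simp add: algebra_simps)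
  then show "y \<noteq> (1 - e) *\<^sub>R y + e *\<^sub>R z" using assms by auto
  have "(1 / e) *\<^sub>R ((1 - e) *\<^sub>R y + e *\<^sub>R z) = ((1 - e) / e) *\<^sub>R y + z"
    using assms(2) by (simp add: scaleR_add_right)
  moreover have "(1 - 1 / e) *\<^sub>R y + ((1 - e) / e) *\<^sub>R y = (1 - 1 / e + (1 - e) / e) *\<^sub>R y"
    by (simp only: scaleR_add_left)
  moreover have "1 - 1 / e + (1 - e) / e = 0" using assms(2) by (simp add: field_simps)
  ultimately show "z = (1 - 1 / e) *\<^sub>R y + (1 / e) *\<^sub>R ((1 - e) *\<^sub>R y + e *\<^sub>R z)"
    by (simp add: add.assoc[symmetric])
qed (use assms in auto)

lemma extend_segment_in_polyhedron:
  fixes D :: "'a::euclidean_space set"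
  assumes H: "finite H" "D = {y. \<forall>(a, b)\<in>H. a \<bullet> y \<le> b}" and "z \<in> D" "y \<in> D"
    and tight: "\<forall>(a, b)\<in>H. a \<bullet> z = b \<longrightarrow> a \<bullet> y = b" and "open V" "z \<in> V"
  obtains e where "1 < e" "(1 - e) *\<^sub>R y + e *\<^sub>R z \<in> V \<inter> D"
proof -
  define g where "g e = (1 - e) *\<^sub>R y + e *\<^sub>R z" for e :: real
  have g_inner: "a \<bullet> g e = (1 - e) * (a \<bullet> y) + e * (a \<bullet> z)" for a e
    by (simp add: g_def inner_add_right)
  define W where "W = V \<inter> (\<Inter>h\<in>{h\<in>H. fst h \<bullet> z \<noteq> snd h}. {w. fst h \<bullet> w < snd h})"
  have "open W"
    unfolding W_def using H(1) \<open>open V\<close> by (intro open_Int open_INT) (auto simp: open_halfspace_lt)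
  moreover have "continuous_on UNIV g" unfolding g_def by (intro continuous_intros)
  ultimately have "open (g -` W)" by (simp add: continuous_on_open_vimage)
  moreover have "g 1 \<in> W"
  proof -
    have "fst h \<bullet> z \<le> snd h" if "h \<in> H" for h using \<open>z \<in> D\<close> H(2) that by (auto simp: case_prod_beta)
    then show ?thesis using \<open>z \<in> V\<close> by (auto simp: W_def g_def less_le)
  qed
  ultimately obtain \<delta> where "\<delta> > 0" "ball 1 \<delta> \<subseteq> g -` W" using open_contains_ball by blast
  then have e: "1 < 1 + \<delta> / 2" "g (1 + \<delta> / 2) \<in> W" by (auto simp: subset_iff dist_real_def)
  have "g (1 + \<delta> / 2) \<in> D"
    unfolding H(2)
  proof (safe)
    fix a b assume ab: "(a, b) \<in> H"
    show "a \<bullet> g (1 + \<delta> / 2) \<le> b"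
    proof (cases "a \<bullet> z = b")
      case True
      then have "a \<bullet> y = b" using tight ab by auto
      then show ?thesis using True g_inner[of a] by (simp add: algebra_simps)
    next
      case False
      then show ?thesis using e(2) ab by (force simp: W_def)
    qed
  qed
  then show thesis using that[of "1 + \<delta> / 2"] e by (simp add: W_def g_def)
qed

lemma convex_complex_of_member:
  assumes "convex D" "concave_on D f" "C \<in> complex_of D f"
  shows "convex C"
proof -
  obtain a b where C: "C \<subseteq> D" "\<forall>x\<in>C. f x = a \<bullet> x + b" "\<forall>x\<in>D - C. f x < a \<bullet> x + b"
    using assms(3) unfolding complex_of_def by blast
  have "C = {y\<in>D. a \<bullet> y + b \<le> f y}"
  proof
    show "C \<subseteq> {y\<in>D. a \<bullet> y + b \<le> f y}" using C(1,2) by auto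
    show "{y\<in>D. a \<bullet> y + b \<le> f y} \<subseteq> C"
    proof
      fix y assume "y \<in> {y\<in>D. a \<bullet> y + b \<le> f y}"
      then have "y \<in> D" "a \<bullet> y + b \<le> f y" by auto
      then show "y \<in> C" using C(3) by (meson DiffI not_le)
    qed
  qed
  moreover have "convex {y\<in>D. a \<bullet> y + b \<le> f y}"
  proof (rule convexI)
    fix y1 y2 and u v :: real
    assume y: "y1 \<in> {y\<in>D. a \<bullet> y + b \<le> f y}" "y2 \<in> {y\<in>D. a \<bullet> y + b \<le> f y}"
      and uv: "0 \<le> u" "0 \<le> v" "u + v = 1"
    have "a \<bullet> (u *\<^sub>R y1 + v *\<^sub>R y2) + b = u * (a \<bullet> y1 + b) + v * (a \<bullet> y2 + b)"
      using affine_combination_inner[OF uv(3)] .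
    also have "\<dots> \<le> u * f y1 + v * f y2" using y uv by (auto intro!: add_mono mult_left_mono)
    also have "\<dots> \<le> f (u *\<^sub>R y1 + v *\<^sub>R y2)"
      using assms(2) y uv unfolding concave_on_iff by blast
    finally show "u *\<^sub>R y1 + v *\<^sub>R y2 \<in> {y\<in>D. a \<bullet> y + b \<le> f y}"
      using convexD[OF assms(1)] y uv by auto
  qed
  ultimately show ?thesis by simp
qed

lemma sums_nonneg_eq_zero:
  fixes g :: "'b \<Rightarrow> real" and h :: "'c \<Rightarrow> real"
  assumes "finite A" "finite B" "\<forall>x\<in>A. 0 \<le> g x" "\<forall>x\<in>B. 0 \<le> h x" "0 < k"
    and "sum g A / k + sum h B \<le> 0"
  shows "\<forall>x\<in>A. g x = 0" "\<forall>x\<in>B. h x = 0"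
proof -
  have "0 \<le> sum g A" "0 \<le> sum h B" using assms(3,4) by (auto intro: sum_nonneg)
  moreover have "0 \<le> sum g A / k" using calculation(1) assms(5) by simp
  ultimately have "sum g A / k = 0" "sum h B = 0" using assms(6) by linarith+
  then have "sum g A = 0" "sum h B = 0" using assms(5) by simp_all
  then show "\<forall>x\<in>A. g x = 0" "\<forall>x\<in>B. h x = 0"
    using sum_nonneg_eq_0_iff[OF assms(1), of g] sum_nonneg_eq_0_iff[OF assms(2), of h] assms(3,4)
    by simp_all
qed

context strictly_concave_complex
begin

lemma empty_in_complex_of: "{} \<in> complex_of D f"
proof -
  obtain y where "y \<in> D" using interior_D(1) interior_subset by blast
  then obtain \<sigma> where \<sigma>: "\<sigma> \<in> PP" "aff_dim \<sigma> = int DIM('a)" by (rule exists_full_cell)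
  then obtain a b where "\<forall>y\<in>\<sigma>. f y = a \<bullet> y + b" using affine_on_cell by blast
  then have "\<forall>x\<in>D. f x < a \<bullet> x + (b + 1)" using below_full_cell_le[OF \<sigma>] by fastforce
  then show ?thesis unfolding complex_of_def by blast
qed

text \<open>Pushing \<open>y\<close> through \<open>z\<close> slightly beyond \<open>z\<close> stays in \<open>D\<close> and lands in a full cell through
  \<open>z\<close>, which contains \<open>y\<close> and has \<open>\<tau>\<close> as a face; as \<open>z\<close> lies on the open segment, \<open>y \<in> \<tau>\<close>.\<close>
lemma mem_cell_if_in_full_cells_and_tight:
  assumes \<tau>: "\<tau> \<in> PP" "z \<in> rel_interior \<tau>" and H: "finite H" "D = {y. \<forall>(a, b)\<in>H. a \<bullet> y \<le> b}"
    and "y \<in> D" and tight: "\<forall>(a, b)\<in>H. a \<bullet> z = b \<longrightarrow> a \<bullet> y = b"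
    and in_full: "\<And>\<rho>. \<rho> \<in> PP \<Longrightarrow> aff_dim \<rho> = int DIM('a) \<Longrightarrow> \<tau> \<subseteq> \<rho> \<Longrightarrow> y \<in> \<rho>"
  shows "y \<in> \<tau>"
proof (cases "y = z")
  case False
  have "z \<in> \<tau>" "z \<in> D" using \<tau> rel_interior_subset cell(2) by blast+
  obtain V where V: "open V" "z \<in> V" "\<And>\<rho>. \<rho> \<in> PP \<Longrightarrow> \<rho> \<inter> V \<noteq> {} \<Longrightarrow> z \<in> \<rho>"
    using exists_star_nbhd by blast
  obtain e where e: "1 < e" "(1 - e) *\<^sub>R y + e *\<^sub>R z \<in> V \<inter> D"
    using extend_segment_in_polyhedron[OF H \<open>z \<in> D\<close> \<open>y \<in> D\<close> tight V(1,2)] by blast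
  define w where "w = (1 - e) *\<^sub>R y + e *\<^sub>R z"
  obtain \<rho> where \<rho>: "\<rho> \<in> PP" "aff_dim \<rho> = int DIM('a)" "w \<in> \<rho>"
    using exists_full_cell e(2) by (auto simp: w_def)
  then have "z \<in> \<rho>" using V(3) e(2) by (auto simp: w_def)
  then have "\<tau> \<subseteq> \<rho>" using subset_cell_if_rel_interior[OF \<tau> \<rho>(1)] by blast
  then have "\<tau> face_of \<rho>" "y \<in> \<rho>"
    using Int_cells(3)[OF \<tau>(1) \<rho>(1)] in_full \<rho>(1,2) by (auto simp: Int_absorb2)
  moreover have "z \<in> open_segment y w" unfolding w_def using in_open_segment_extension False e(1) .
  ultimately show ?thesis using face_ofD \<rho>(3) \<open>z \<in> \<tau>\<close> by blast
qed (use assms rel_interior_subset in blast)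

lemma mem_cell_iff_slacks_vanish:
  assumes \<tau>: "\<tau> \<in> PP" "z \<in> rel_interior \<tau>" and H: "finite H" "D = {y. \<forall>(a, b)\<in>H. a \<bullet> y \<le> b}"
    and AB: "\<And>\<rho> y. \<rho> \<in> PP \<Longrightarrow> y \<in> \<rho> \<Longrightarrow> f y = A \<rho> \<bullet> y + B \<rho>" and "y \<in> D"
  shows "y \<in> \<tau> \<longleftrightarrow> (\<forall>\<rho>\<in>PP. aff_dim \<rho> = int DIM('a) \<and> \<tau> \<subseteq> \<rho> \<longrightarrow> f y = A \<rho> \<bullet> y + B \<rho>)
      \<and> (\<forall>(a, b)\<in>H. a \<bullet> z = b \<longrightarrow> a \<bullet> y = b)"
proof
  assume "y \<in> \<tau>"
  moreover have "a \<bullet> y = b" if "(a, b) \<in> H" "a \<bullet> z = b" for a b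
  proof -
    have "\<tau> \<subseteq> {x. a \<bullet> x \<le> b}" using cell(2)[OF \<tau>(1)] H(2) that(1) by auto
    then show ?thesis
      by (rule rel_interior_on_supporting_hyperplane[OF cell(4)[OF \<tau>(1)] _ \<tau>(2) that(2) \<open>y \<in> \<tau>\<close>])
  qed
  ultimately show "(\<forall>\<rho>\<in>PP. aff_dim \<rho> = int DIM('a) \<and> \<tau> \<subseteq> \<rho> \<longrightarrow> f y = A \<rho> \<bullet> y + B \<rho>)
      \<and> (\<forall>(a, b)\<in>H. a \<bullet> z = b \<longrightarrow> a \<bullet> y = b)"
    using AB by auto
next
  assume vanish: "(\<forall>\<rho>\<in>PP. aff_dim \<rho> = int DIM('a) \<and> \<tau> \<subseteq> \<rho> \<longrightarrow> f y = A \<rho> \<bullet> y + B \<rho>)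
      \<and> (\<forall>(a, b)\<in>H. a \<bullet> z = b \<longrightarrow> a \<bullet> y = b)"
  have "y \<in> \<rho>" if "\<rho> \<in> PP" "aff_dim \<rho> = int DIM('a)" "\<tau> \<subseteq> \<rho>" for \<rho>
  proof (rule ccontr)
    assume "y \<notin> \<rho>"
    then have "f y < A \<rho> \<bullet> y + B \<rho>"
      using below_full_cell[OF that(1,2) _ \<open>y \<in> D\<close>] AB[OF that(1)] by blast
    moreover have "f y = A \<rho> \<bullet> y + B \<rho>" using vanish that by blast
    ultimately show False by simp
  qed
  then show "y \<in> \<tau>"
    by (rule mem_cell_if_in_full_cells_and_tight[OF \<tau> H \<open>y \<in> D\<close> conjunct2[OF vanish]])
qed

lemma cell_in_complex_of:
  assumes \<tau>: "\<tau> \<in> PP"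
  shows "\<tau> \<in> complex_of D f"
proof (cases "\<tau> = {}")
  case False
  then obtain z where z: "z \<in> rel_interior \<tau>" using rel_interior_eq_empty cell(4)[OF \<tau>] by blast
  obtain H where H: "finite H" "D = {y. \<forall>(a, b)\<in>H. a \<bullet> y \<le> b}"
    using polyhedron_obtain_inequalities[OF polyhedron_D] by blast
  obtain A B where AB: "\<And>\<rho> y. \<rho> \<in> PP \<Longrightarrow> y \<in> \<rho> \<Longrightarrow> f y = A \<rho> \<bullet> y + B \<rho>"
    using affine_on_cell by metis
  define R where "R = {\<rho>\<in>PP. aff_dim \<rho> = int DIM('a) \<and> \<tau> \<subseteq> \<rho>}"
  define T where "T = {h\<in>H. fst h \<bullet> z = snd h}"
  have "finite R" "finite T" using finite_PP H(1) by (simp_all add: R_def T_def)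
  have "z \<in> D" using z rel_interior_subset cell(2)[OF \<tau>] by blast
  then obtain \<rho>z where "\<rho>z \<in> PP" "aff_dim \<rho>z = int DIM('a)" "z \<in> \<rho>z" by (rule exists_full_cell)
  then have "\<rho>z \<in> R" using subset_cell_if_rel_interior[OF \<tau> z] by (auto simp: R_def)
  then have "card R > 0" using \<open>finite R\<close> card_gt_0_iff by blast
  define c where "c = (1 / card R) *\<^sub>R (\<Sum>\<rho>\<in>R. A \<rho>) - (\<Sum>h\<in>T. fst h)"
  define d where "d = (\<Sum>\<rho>\<in>R. B \<rho>) / card R + (\<Sum>h\<in>T. snd h)"
  have gap: "c \<bullet> y + d - f y
      = (\<Sum>\<rho>\<in>R. A \<rho> \<bullet> y + B \<rho> - f y) / card R + (\<Sum>h\<in>T. snd h - fst h \<bullet> y)" for y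
    using \<open>card R > 0\<close>
    by (simp add: c_def d_def sum.distrib sum_subtractf inner_diff_left inner_sum_left
        add_divide_distrib diff_divide_distrib)
  have slacks: "\<forall>\<rho>\<in>R. 0 \<le> A \<rho> \<bullet> y + B \<rho> - f y" "\<forall>h\<in>T. 0 \<le> snd h - fst h \<bullet> y" if "y \<in> D" for y
    using below_full_cell_le[of _ "A _" "B _" y] AB that H(2) by (fastforce simp: R_def T_def)+
  have iff: "y \<in> \<tau> \<longleftrightarrow> (\<forall>\<rho>\<in>R. A \<rho> \<bullet> y + B \<rho> - f y = 0) \<and> (\<forall>h\<in>T. snd h - fst h \<bullet> y = 0)"
    if "y \<in> D" for y
    using mem_cell_iff_slacks_vanish[OF \<tau> z H AB that] by (auto simp: R_def T_def)
  have "\<forall>x\<in>\<tau>. f x = c \<bullet> x + d"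
    using iff gap cell(2)[OF \<tau>] by (fastforce simp: diff_eq_eq)
  moreover have "\<forall>x\<in>D - \<tau>. f x < c \<bullet> x + d"
  proof
    fix x assume x: "x \<in> D - \<tau>"
    show "f x < c \<bullet> x + d"
    proof (rule ccontr)
      assume "\<not> f x < c \<bullet> x + d"
      then have "(\<Sum>\<rho>\<in>R. A \<rho> \<bullet> x + B \<rho> - f x) / card R + (\<Sum>h\<in>T. snd h - fst h \<bullet> x) \<le> 0"
        using gap[of x] by linarith
      moreover have "x \<in> D" "0 < real (card R)" using x \<open>card R > 0\<close> by auto
      ultimately show False
        using sums_nonneg_eq_zero[OF \<open>finite R\<close> \<open>finite T\<close> slacks[OF \<open>x \<in> D\<close>]] iff x by blast
    qed
  qed
  ultimately show ?thesis unfolding complex_of_def using cell(2)[OF \<tau>] by blast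
qed (simp add: empty_in_complex_of)

lemma complex_of_member_subset_full_cell:
  assumes C: "C \<in> complex_of D f" "z \<in> rel_interior C"
    and \<rho>: "\<rho> \<in> PP" "aff_dim \<rho> = int DIM('a)" "z \<in> \<rho>"
  shows "C \<subseteq> \<rho>"
proof
  obtain a b where "C \<subseteq> D" and f_C: "\<forall>x\<in>C. f x = a \<bullet> x + b"
    using C(1) unfolding complex_of_def by blast
  obtain a' b' where f_\<rho>: "\<forall>x\<in>\<rho>. f x = a' \<bullet> x + b'" using affine_on_cell[OF \<rho>(1)] by blast
  have "convex C" using convex_complex_of_member[OF convex_D concave C(1)] .
  fix y assume "y \<in> C"
  show "y \<in> \<rho>"
  proof (rule ccontr)
    assume "y \<notin> \<rho>"
    then have y_gap: "a \<bullet> y + b < a' \<bullet> y + b'"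
      using below_full_cell[OF \<rho>(1,2) f_\<rho>] f_C \<open>y \<in> C\<close> \<open>C \<subseteq> D\<close> by fastforce
    have "z \<in> C" using C(2) rel_interior_subset by blast
    then have z_eq: "a \<bullet> z + b = a' \<bullet> z + b'" using f_C f_\<rho> \<rho>(3) by metis
    obtain e where e: "1 < e" "(1 - e) *\<^sub>R y + e *\<^sub>R z \<in> C"
      using convex_rel_interior_iff[OF \<open>convex C\<close>] C(2) \<open>y \<in> C\<close> by blast
    define w where "w = (1 - e) *\<^sub>R y + e *\<^sub>R z"
    have "w \<in> C" "(1 - e) + e = 1" using e(2) by (simp_all add: w_def)
    have "a' \<bullet> w + b' = (1 - e) * (a' \<bullet> y + b') + e * (a' \<bullet> z + b')"
      unfolding w_def by (rule affine_combination_inner) simp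
    also have "\<dots> < (1 - e) * (a \<bullet> y + b) + e * (a \<bullet> z + b)"
      using mult_strict_left_mono_neg[OF y_gap, of "1 - e"] z_eq e(1) by simp
    also have "\<dots> = a \<bullet> w + b"
      unfolding w_def by (rule affine_combination_inner[symmetric]) simp
    also have "\<dots> = f w" using f_C \<open>w \<in> C\<close> by simp
    finally have "a' \<bullet> w + b' < f w" .
    moreover have "f w \<le> a' \<bullet> w + b'"
      using below_full_cell_le[OF \<rho>(1,2) f_\<rho>] \<open>w \<in> C\<close> \<open>C \<subseteq> D\<close> by blast
    ultimately show False by simp
  qed
qed

lemma complex_of_member_in_PP:
  assumes C: "C \<in> complex_of D f"
  shows "C \<in> PP"
proof (cases "C = {}")
  case True
  obtain y where "y \<in> D" using interior_D(1) interior_subset by blast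
  then obtain \<rho> where "\<rho> \<in> PP" by (metis exists_full_cell)
  then show ?thesis using True face_in_PP by blast
next
  case False
  obtain a b where C_D: "C \<subseteq> D" and f_C: "\<forall>x\<in>C. f x = a \<bullet> x + b"
    and below: "\<forall>x\<in>D - C. f x < a \<bullet> x + b"
    using C unfolding complex_of_def by blast
  have "convex C" using convex_complex_of_member[OF convex_D concave C] .
  then obtain z where z: "z \<in> rel_interior C" using False rel_interior_eq_empty by blast
  then have "z \<in> D" using C_D rel_interior_subset by blast
  then obtain \<rho> where \<rho>: "\<rho> \<in> PP" "aff_dim \<rho> = int DIM('a)" "z \<in> \<rho>" by (rule exists_full_cell)
  obtain a' b' where f_\<rho>: "\<forall>x\<in>\<rho>. f x = a' \<bullet> x + b'" using affine_on_cell[OF \<rho>(1)] by blast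
  have "C \<subseteq> \<rho>" using complex_of_member_subset_full_cell[OF C z \<rho>] .
  have f_le: "f y \<le> a \<bullet> y + b" if "y \<in> \<rho>" for y
    using below f_C cell(2)[OF \<rho>(1)] that by (metis DiffI less_imp_le order_refl subsetD)
  have "C = \<rho> \<inter> {y. (a' - a) \<bullet> y = b - b'}"
  proof (intro set_eqI iffI)
    fix y assume "y \<in> C"
    then have "y \<in> \<rho>" using \<open>C \<subseteq> \<rho>\<close> by blast
    moreover have "a \<bullet> y + b = a' \<bullet> y + b'" using f_C f_\<rho> \<open>y \<in> C\<close> \<open>y \<in> \<rho>\<close> by metis
    ultimately show "y \<in> \<rho> \<inter> {y. (a' - a) \<bullet> y = b - b'}" by (simp add: inner_diff_left)
  next
    fix y assume y: "y \<in> \<rho> \<inter> {y. (a' - a) \<bullet> y = b - b'}"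
    then have "f y = a \<bullet> y + b" "y \<in> D" using f_\<rho> cell(2)[OF \<rho>(1)] by (auto simp: inner_diff_left)
    then show "y \<in> C" using below by (metis DiffI less_irrefl)
  qed
  moreover have "(\<rho> \<inter> {y. (a' - a) \<bullet> y = b - b'}) face_of \<rho>"
  proof (rule face_of_Int_supporting_hyperplane_le[OF cell(4)[OF \<rho>(1)]])
    fix y assume "y \<in> \<rho>"
    then have "a' \<bullet> y + b' \<le> a \<bullet> y + b" using f_le f_\<rho> by simp
    then show "(a' - a) \<bullet> y \<le> b - b'" by (simp add: inner_diff_left)
  qed
  ultimately show ?thesis using face_in_PP[OF \<rho>(1)] by simp
qed

lemma complex_of_eq: "complex_of D f = PP"
  using cell_in_complex_of complex_of_member_in_PP by blast

end

lemma strictly_concave_iff_concave_complex_of: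
  fixes D :: "'a::euclidean_space set"
  assumes "polyhedron D" "aff_dim D = int DIM('a)" "polyhedral_complex D PP" "defined_on PP f"
  shows "strictly_concave PP (rel_interior D) f \<longleftrightarrow> concave_on D f \<and> PP = complex_of D f"
proof
  assume "strictly_concave PP (rel_interior D) f"
  then interpret strictly_concave_complex D PP f
    using assms by unfold_locales
  show "concave_on D f \<and> PP = complex_of D f" using concave complex_of_eq by simp
qed (use strictly_concave_if_cells_in_complex_of assms(3,4) in auto)

lemma defined_on_complex_of: "PP = complex_of D g \<Longrightarrow> defined_on PP g"
  unfolding defined_on_def complex_of_def by blast

theorem proposition4p19:
  fixes D :: "'a::euclidean_space set" and PP :: "'a set set" and f :: "'a \<Rightarrow> real"
  assumes "polyhedron D" and "aff_dim D = int DIM('a)"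
    and "polyhedral_complex D PP"
    and "defined_on PP f"
  shows "(strictly_concave PP (rel_interior D) f \<longleftrightarrow> concave_on D f \<and> PP = complex_of D f)
       \<and> (regular_on PP (rel_interior D) \<longleftrightarrow>
            (\<exists>g. piecewise_affine D g \<and> concave_on D g \<and> PP = complex_of D g))"
proof
  note iff = strictly_concave_iff_concave_complex_of[OF assms(1-3)]
  show "strictly_concave PP (rel_interior D) f \<longleftrightarrow> concave_on D f \<and> PP = complex_of D f"
    using iff[OF assms(4)] .
  have "strictly_concave PP (rel_interior D) g \<longleftrightarrow>
      piecewise_affine D g \<and> concave_on D g \<and> PP = complex_of D g" for g
  proof
    assume g: "strictly_concave PP (rel_interior D) g"
    then have "defined_on PP g" by (simp add: strictly_concave_def)
    then show "piecewise_affine D g \<and> concave_on D g \<and> PP = complex_of D g"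
      using iff g assms(3) unfolding piecewise_affine_def by blast
  next
    assume "piecewise_affine D g \<and> concave_on D g \<and> PP = complex_of D g"
    then show "strictly_concave PP (rel_interior D) g" using iff defined_on_complex_of by blast
  qed
  then show "regular_on PP (rel_interior D) \<longleftrightarrow>
      (\<exists>g. piecewise_affine D g \<and> concave_on D g \<and> PP = complex_of D g)"
    unfolding regular_on_def by blast
qed

end
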